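(* Let $x\in\mathbb{R}$ and let $f:\mathbb{R}\to\mathbb{R}$ be analytic and nonzero on the interval $[0,x]$, with $f(0)=1$, and let $r>1$. For each nonempty finite set $\mathcal{S}\subset\mathbb{N}^*$ of positive integers define, for integers $n\ge |\mathcal{S}|$, \[ x_n(\mathcal{S},r,x)=\Big[\prod_{k\in\mathcal{S}}(r^k-1)^{1/k}\Big]\cdot\frac{x}{r^n}, \qquad \mathcal{P}_f(\mathcal{S},r,x)=\prod_{n=|\mathcal{S}|}^{\infty}\Big[f\big(x_n(\mathcal{S},r,x)\big)\Big]^{\binom{n-1}{|\mathcal{S}|-1}} . \] Then \[ f(x)=\lim_{r\downarrow 1}\ \frac{\prod_{|\mathcal{S}|\ \text{odd}}\mathcal{P}_f(\mathcal{S},r,x)}{\prod_{|\mathcal{S}|\ \text{even}}\mathcal{P}_f(\mathcal{S},r,x)}, \] where the product in the numerator runs over all nonempty finite subsets $\mathcal{S}\subset\mathbb{N}^*$ with an odd number of elements and the product in the denominator over all finite subsets $\mathcal{S}\subset\mathbb{N}^*$ with a (positive) even number of elements.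
   Context: $\mathbb{N}^*$ denotes the set of positive integers and $|\mathcal{S}|$ the cardinality of $\mathcal{S}$. *)

theory Defs
  imports "HOL-Analysis.Analysis"
begin

definition real_analytic_at :: "(real \<Rightarrow> real) \<Rightarrow> real \<Rightarrow> bool" where
  "real_analytic_at f y \<longleftrightarrow>
     (\<exists>\<delta>>0. \<exists>a::nat \<Rightarrow> real. \<forall>z. \<bar>z - y\<bar> < \<delta> \<longrightarrow> (\<lambda>k. a k * (z - y) ^ k) sums f z)"

definition real_analytic_on :: "(real \<Rightarrow> real) \<Rightarrow> real set \<Rightarrow> bool" where
  "real_analytic_on f A \<longleftrightarrow> (\<forall>y\<in>A. real_analytic_at f y)"

definition xn :: "nat set \<Rightarrow> real \<Rightarrow> real \<Rightarrow> nat \<Rightarrow> real" where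
  "xn S r x n = (\<Prod>k\<in>S. (r ^ k - 1) powr (1 / real k)) * x / r ^ n"

definition Pf :: "(real \<Rightarrow> real) \<Rightarrow> nat set \<Rightarrow> real \<Rightarrow> real \<Rightarrow> real" where
  "Pf f S r x = (\<Prod>i. f (xn S r x (i + card S)) ^ ((i + card S - 1) choose (card S - 1)))"

text \<open>Truncated ratio: sets S restricted to subsets of {1..N}.\<close>
definition ratioN :: "(real \<Rightarrow> real) \<Rightarrow> nat \<Rightarrow> real \<Rightarrow> real \<Rightarrow> real" where
  "ratioN f N r x =
     (\<Prod>S\<in>{S. S \<subseteq> {1..N} \<and> S \<noteq> {} \<and> odd (card S)}. Pf f S r x) /
     (\<Prod>S\<in>{S. S \<subseteq> {1..N} \<and> S \<noteq> {} \<and> even (card S)}. Pf f S r x)"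

end

theory Submission
  imports Defs "HOL-Complex_Analysis.Complex_Analysis"
begin
(*
  Let phi be a holomorphic logarithm of z |-> f (x z) on a neighbourhood of [0, 1] with phi 0 = 0.
  Since x_(i + |S|) = x * beta_S / r^i with beta_S = prod_(k in S) (1 - r^-k)^(1/k), the logarithm
  of P_f(S) is the real part of Q_S(1) = sum_i C(i + |S| - 1, |S| - 1) phi(beta_S / r^i), and the
  logarithm of the ratio truncated to S <= {1..N} is Re (phi 1 - H_N 1), H_N = sum_S (-1)^|S| Q_S.
  Adding N + 1 to S sums over the dilations z |-> z beta_(N+1) / r^j, so
  H_(N+1) z = H_N z - sum_j H_N (z beta_(N+1) / r^j).  On z^m this multiplies by
  1 - beta_k^m / (1 - r^-m), which vanishes for k = m; so once N >= K only the image of the Taylor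
  remainder z^(K+1) psi z survives.  That image is iterated by
  Psi |-> Psi - sum_j (beta / r^j)^(K+1) Psi (z beta / r^j), which by Cauchy estimates halves the
  sup norm on slowly shrinking neighbourhoods once r^(K+1) >= 4 and N is large.  Hence H_N 1 -> 0,
  and for every r > 1 the truncated ratios converge to exp (Re (phi 1)) = f x.
*)

section \<open>Binomial series\<close>

lemma binomial_symmetric_add: "(a + b) choose b = (a + b) choose (a::nat)"
  by (metis binomial_symmetric add_diff_cancel_right' le_add2)

lemma sum_atMost_choose_add: "(\<Sum>i\<le>n. (i + t) choose t) = (n + Suc t) choose Suc t"
proof -
  have "(\<Sum>i\<le>n. (i + t) choose t) = (\<Sum>i\<le>n. (t + i) choose i)"
    by (intro sum.cong) (auto simp: binomial_symmetric_add add.commute)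
  also have "\<dots> = Suc (t + n) choose n" by (rule sum_choose_lower)
  also have "\<dots> = (n + Suc t) choose Suc t"
    by (metis add_Suc_right add.commute binomial_symmetric_add)
  finally show ?thesis .
qed

lemma choose_add_le_choose_Suc:
  fixes i n t :: nat
  assumes "i \<le> n"
  shows "(i + t) choose t \<le> (n + Suc t) choose Suc t"
  using member_le_sum[of i "{..n}" "\<lambda>i. (i + t) choose t"] assms
  by (simp add: sum_atMost_choose_add)

lemma summable_choose_mult_power:
  fixes q :: real
  assumes "0 \<le> q" "q < 1"
  shows "summable (\<lambda>i. real ((i + s) choose s) * q ^ i)"
proof (induction s)
  case 0
  then show ?case using assms by (simp add: summable_geometric)
next
  case (Suc s)
  \<comment> \<open>the Cauchy product with the geometric series raises the binomial index by one\<close>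
  have "summable (\<lambda>k. \<Sum>i\<le>k. (real ((i + s) choose s) * q ^ i) * q ^ (k - i))"
    using Suc assms by (intro summable_Cauchy_product) (simp_all add: summable_geometric)
  moreover have "(\<Sum>i\<le>k. (real ((i + s) choose s) * q ^ i) * q ^ (k - i))
      = real ((k + Suc s) choose Suc s) * q ^ k" for k
  proof -
    have "(\<Sum>i\<le>k. (real ((i + s) choose s) * q ^ i) * q ^ (k - i))
        = (\<Sum>i\<le>k. real ((i + s) choose s)) * q ^ k"
      unfolding sum_distrib_right
      by (intro sum.cong refl) (simp add: mult.assoc flip: power_add)
    then show ?thesis by (simp only: flip: of_nat_sum sum_atMost_choose_add)
  qed
  ultimately show ?case by simp
qed

lemma sums_choose_double_series:
  fixes G :: "nat \<Rightarrow> complex"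
  assumes sG: "summable (\<lambda>n. real ((n + Suc t) choose Suc t) * norm (G n))"
  shows "(\<lambda>j. \<Sum>i. of_nat ((i + t) choose t) * G (i + j))
           sums (\<Sum>n. of_nat ((n + Suc t) choose Suc t) * G n)"
proof -
  define T where "T = (\<lambda>(n,i). of_nat ((i + t) choose t) * G n)"
  define Sig where "Sig = Sigma (UNIV::nat set) (\<lambda>n. {..n})"
  have row_sum: "(\<Sum>i\<le>n. norm (T (n,i))) = real ((n + Suc t) choose Suc t) * norm (G n)" for n
    unfolding T_def by (simp add: norm_mult sum_distrib_right[symmetric] sum_atMost_choose_add flip: of_nat_sum)
  have fib: "((\<lambda>i. T (n,i)) has_sum (of_nat ((n + Suc t) choose Suc t) * G n)) {..n}" for n
  proof -
    have "(\<Sum>i\<le>n. T (n,i)) = of_nat ((n + Suc t) choose Suc t) * G n"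
      unfolding T_def by (simp add: sum_distrib_right[symmetric] sum_atMost_choose_add flip: of_nat_sum)
    then show ?thesis using has_sum_finite[of "{..n}" "\<lambda>i. T (n,i)"] by simp
  qed
  have "(\<lambda>x. norm (T x)) summable_on Sig"
    unfolding Sig_def Infinite_Sum.abs_summable_on_Sigma_iff
  proof (intro conjI ballI)
    fix n :: nat show "(\<lambda>y. norm (T (n, y))) summable_on {..n}" by (rule summable_on_finite) auto
  next
    have "infsum (\<lambda>y. norm (T (n, y))) {..n} = real ((n + Suc t) choose Suc t) * norm (G n)" for n
      by (simp add: infsum_finite row_sum)
    then show "(\<lambda>x. norm (\<Sum>\<^sub>\<infinity>y\<in>{..x}. norm (T (x, y)))) summable_on UNIV"
      using sG by (subst summable_on_UNIV_nonneg_real_iff) auto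
  qed
  then have hs: "(T has_sum infsum T Sig) Sig" by (rule has_sum_infsum[OF abs_summable_summable])
  have "((\<lambda>n. of_nat ((n + Suc t) choose Suc t) * G n) has_sum infsum T Sig) UNIV"
    using hs unfolding Sig_def by (rule has_sum_Sigma'[OF _ fib])
  then have total: "infsum T Sig = (\<Sum>n. of_nat ((n + Suc t) choose Suc t) * G n)"
    using has_sum_imp_sums sums_unique by blast
  \<comment> \<open>reindex the triangle \<open>i \<le> n\<close> by \<open>j = n - i\<close>\<close>
  define T' where "T' = (\<lambda>(j,i). of_nat ((i + t) choose t) * G (i + j))"
  have "(T' has_sum infsum T Sig) (UNIV \<times> UNIV) = (T has_sum infsum T Sig) Sig"
    by (rule has_sum_reindex_bij_witness[where j="\<lambda>(j,i). (i+j, i)" and i="\<lambda>(n,i). (n-i, i)"])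
       (auto simp: Sig_def T_def T'_def)
  with hs have hs': "(T' has_sum infsum T Sig) (Sigma UNIV (\<lambda>_. UNIV))" by simp
  have fib': "((\<lambda>i. T' (j,i)) has_sum (\<Sum>i. of_nat ((i + t) choose t) * G (i + j))) UNIV" for j
  proof -
    have "summable (\<lambda>i. norm (of_nat ((i + t) choose t) * G (i + j)))"
    proof (rule summable_comparison_test')
      show "summable (\<lambda>i. real ((i + j + Suc t) choose Suc t) * norm (G (i + j)))"
        using summable_ignore_initial_segment[OF sG, of j] by simp
      have "real ((i + t) choose t) \<le> real ((i + j + Suc t) choose Suc t)" for i
        using choose_add_le_choose_Suc[of i "i + j" t] by (simp only: of_nat_le_iff)
      then show "norm (norm (of_nat ((i + t) choose t) * G (i + j)))
          \<le> real ((i + j + Suc t) choose Suc t) * norm (G (i + j))" for i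
        by (simp add: norm_mult mult_right_mono del: binomial_Suc_Suc)
    qed
    then show ?thesis
      using norm_summable_imp_has_sum summable_sums summable_norm_cancel by (fastforce simp: T'_def)
  qed
  have "((\<lambda>j. \<Sum>i. of_nat ((i + t) choose t) * G (i + j)) has_sum infsum T Sig) UNIV"
    by (rule has_sum_Sigma'[OF hs' fib'])
  then show ?thesis unfolding total by (rule has_sum_imp_sums)
qed

section \<open>Neighbourhoods of the unit segment\<close>

definition scaling_closed :: "complex set \<Rightarrow> bool" where
  "scaling_closed D \<longleftrightarrow> (\<forall>z\<in>D. \<forall>t. 0 \<le> t \<and> t \<le> 1 \<longrightarrow> z * of_real t \<in> D)"

definition segment_nbhd :: "real \<Rightarrow> complex set" where
  "segment_nbhd e = {z. \<exists>t\<in>{0..1}. cmod (z - of_real t) < e}"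

lemma segment_nbhd_eq_UN: "segment_nbhd e = (\<Union>t\<in>{0..1}. ball (of_real t) e)"
  by (auto simp: segment_nbhd_def dist_norm norm_minus_commute)

lemma open_segment_nbhd: "open (segment_nbhd e)" unfolding segment_nbhd_eq_UN by auto

lemma convex_segment_nbhd: "convex (segment_nbhd e)"
  unfolding convex_def segment_nbhd_def
proof (clarify)
  fix x y :: complex and u v :: real and t1 t2
  assume uv: "0 \<le> u" "0 \<le> v" "u + v = 1" and t1: "t1 \<in> {0..1}" "cmod (x - of_real t1) < e"
    and t2: "t2 \<in> {0..1}" "cmod (y - of_real t2) < e"
  have "u * t1 + v * t2 \<in> {0..1}" using uv t1 t2
    by (auto intro: convex_bound_le[of t1 1 t2 u v, simplified])
  moreover have "cmod (u *\<^sub>R x + v *\<^sub>R y - of_real (u * t1 + v * t2)) < e"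
  proof -
    have "u *\<^sub>R x + v *\<^sub>R y - of_real (u * t1 + v * t2) = u *\<^sub>R (x - of_real t1) + v *\<^sub>R (y - of_real t2)"
      by (simp add: scaleR_conv_of_real algebra_simps)
    also have "cmod \<dots> \<le> u * cmod (x - of_real t1) + v * cmod (y - of_real t2)"
      using uv by (auto intro: order_trans[OF norm_triangle_ineq] simp: abs_of_nonneg)
    also have "\<dots> < e"
    proof (cases "u = 0")
      case True then show ?thesis using uv t2 by simp
    next
      case False
      then have "u * cmod (x - of_real t1) < u * e" using uv t1 by simp
      moreover have "v * cmod (y - of_real t2) \<le> v * e" using uv t2 by (intro mult_left_mono) auto
      ultimately show ?thesis using uv by (simp add: algebra_simps) (metis add_less_le_mono distrib_left mult_1_right uv(3))
    qed
    finally show ?thesis .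
  qed
  ultimately show "\<exists>t\<in>{0..1}. cmod (u *\<^sub>R x + v *\<^sub>R y - of_real t) < e" by blast
qed

lemma scaling_closed_segment_nbhd: "scaling_closed (segment_nbhd e)"
  unfolding scaling_closed_def segment_nbhd_def
proof (clarify)
  fix z :: complex and s t :: real
  assume s: "s \<in> {0..1}" "cmod (z - of_real s) < e" and t: "0 \<le> t" "t \<le> 1"
  have "t * s \<in> {0..1}" using s t by (auto simp: mult_le_one)
  moreover have "cmod (z * of_real t - of_real (t * s)) < e"
  proof (cases "t = 0")
    case True then show ?thesis using s by (simp add: le_less_trans[OF norm_ge_zero])
  next
    case False
    have "cmod (z * of_real t - of_real (t * s)) = t * cmod (z - of_real s)"
      using t by (simp add: norm_mult algebra_simps flip: right_diff_distrib norm_of_real)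
         (metis abs_of_nonneg mult.commute norm_mult norm_of_real of_real_mult right_diff_distrib')
    also have "\<dots> \<le> 1 * cmod (z - of_real s)" using t by (intro mult_right_mono) auto
    finally show ?thesis using s by simp
  qed
  ultimately show "\<exists>t'\<in>{0..1}. cmod (z * of_real t - of_real t') < e" by blast
qed

lemma one_in_segment_nbhd: "e > 0 \<Longrightarrow> 1 \<in> segment_nbhd e"
  unfolding segment_nbhd_def by (rule CollectI, rule bexI[of _ 1]) auto

lemma segment_nbhd_mono: "e \<le> e' \<Longrightarrow> segment_nbhd e \<subseteq> segment_nbhd e'"
  unfolding segment_nbhd_def by (auto simp: Bex_def)

lemma norm_less_segment_nbhd: "z \<in> segment_nbhd e \<Longrightarrow> cmod z < 1 + e"
proof -
  assume "z \<in> segment_nbhd e"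
  then obtain t where t: "t \<in> {0..1}" "cmod (z - of_real t) < e" by (auto simp: segment_nbhd_def)
  have "cmod z \<le> cmod (z - of_real t) + cmod (of_real t :: complex)" using norm_triangle_ineq[of "z - of_real t" "of_real t"] by simp
  also have "\<dots> < e + 1" using t by auto
  finally show ?thesis by simp
qed

lemma ball_subset_segment_nbhd: assumes "z \<in> segment_nbhd e'" "e' < e" shows "ball z (e - e') \<subseteq> segment_nbhd e"
proof
  fix w assume "w \<in> ball z (e - e')"
  then have w: "cmod (w - z) < e - e'" by (simp add: dist_norm norm_minus_commute)
  obtain t where t: "t \<in> {0..1}" "cmod (z - of_real t) < e'" using assms by (auto simp: segment_nbhd_def)
  have "cmod (w - of_real t) \<le> cmod (w - z) + cmod (z - of_real t)" by (rule norm_diff_triangle_le) auto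
  also have "\<dots> < e" using w t by simp
  finally show "w \<in> segment_nbhd e" using t by (auto simp: segment_nbhd_def)
qed

lemma zero_in_segment_nbhd: "e > 0 \<Longrightarrow> 0 \<in> segment_nbhd e"
  unfolding segment_nbhd_def by (rule CollectI, rule bexI[of _ 0]) auto

lemma of_real_in_segment_nbhd: "e > 0 \<Longrightarrow> t \<in> {0..1} \<Longrightarrow> of_real t \<in> segment_nbhd e"
  unfolding segment_nbhd_def by (rule CollectI, rule bexI[of _ t]) auto

lemma continuous_bounded_segment_nbhd:
  assumes "continuous_on (segment_nbhd e') g" "e < e'"
  obtains M where "\<And>w. w \<in> segment_nbhd e \<Longrightarrow> cmod (g w) \<le> M"
proof -
  define C where "C = (\<lambda>(t, w). of_real t + w) ` ({0..1::real} \<times> cball (0::complex) e)"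
  have "compact C" unfolding C_def
    by (intro compact_continuous_image compact_Times compact_Icc compact_cball)
      (auto simp: case_prod_unfold intro!: continuous_intros)
  have sub1: "segment_nbhd e \<subseteq> C"
  proof
    fix z assume "z \<in> segment_nbhd e"
    then obtain t where t: "t \<in> {0..1}" "cmod (z - of_real t) < e" by (auto simp: segment_nbhd_def)
    then have "(t, z - of_real t) \<in> {0..1} \<times> cball 0 e" by auto
    then show "z \<in> C" unfolding C_def by (rule rev_image_eqI) simp
  qed
  have "C \<subseteq> segment_nbhd e'"
  proof
    fix z assume "z \<in> C"
    then obtain a b where "a \<in> {0..1}" "cmod b \<le> e" "z = of_real a + b" by (auto simp: C_def)
    then show "z \<in> segment_nbhd e'" using assms(2) by (auto simp: segment_nbhd_def intro!: bexI[of _ a])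
  qed
  then have "compact (g ` C)"
    using \<open>compact C\<close> continuous_on_subset[OF assms(1)] by (blast intro: compact_continuous_image)
  then obtain M where "\<forall>y\<in>g ` C. norm y \<le> M" using compact_imp_bounded bounded_iff by metis
  then show ?thesis using sub1 that by blast
qed

section \<open>Holomorphic logarithm of a real analytic function\<close>

lemma holomorphic_complexified_power_series:
  fixes c :: "nat \<Rightarrow> real"
  assumes ser: "\<And>u. \<bar>u - y\<bar> < \<delta> \<Longrightarrow> (\<lambda>k. c k * (u - y) ^ k) sums f u"
  shows "(\<lambda>w. \<Sum>k. of_real (c k) * (w - of_real y) ^ k) holomorphic_on ball (of_real y) \<delta>"
proof -
  have "(\<lambda>w. \<Sum>k. of_real (c k) * (w - of_real y) ^ k) field_differentiable at z"
    if z: "cmod (z - of_real y) < \<delta>" for z :: complex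
  proof -
    define t where "t = (cmod (z - of_real y) + \<delta>) / 2"
    have t: "cmod (z - of_real y) < t" "t < \<delta>" using z by (auto simp: t_def)
    then have "0 < t" using norm_ge_zero[of "z - of_real y"] by linarith
    then have "summable (\<lambda>k. c k * t ^ k)"
      using ser[of "y + t"] t by (auto intro: sums_summable)
    then have sm: "summable (\<lambda>k. of_real (c k) * (of_real t :: complex) ^ k)"
      using summable_of_real_iff[where f="\<lambda>k. c k * t ^ k" and 'a=complex] by simp
    have "norm (z - of_real y) < norm (of_real t :: complex)" using t \<open>0 < t\<close> by simp
    then have "(\<lambda>w. \<Sum>k. of_real (c k) * w ^ k) field_differentiable at (z - of_real y)"
      using termdiffs_strong[OF sm] field_differentiable_def by blast
    then have "((\<lambda>w. \<Sum>k. of_real (c k) * w ^ k) \<circ> (\<lambda>w. w - of_real y)) field_differentiable at z"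
      by (intro field_differentiable_compose derivative_intros) auto
    then show ?thesis by (simp add: o_def)
  qed
  then show ?thesis
    by (auto simp: holomorphic_on_def dist_norm norm_minus_commute intro: field_differentiable_at_within)
qed

lemma complexified_power_series_of_real:
  fixes c :: "nat \<Rightarrow> real"
  assumes "(\<lambda>k. c k * (u - y) ^ k) sums f u"
  shows "(\<Sum>k. of_real (c k) * (of_real u - of_real y) ^ k) = (of_real (f u) :: complex)"
  using sums_of_real[OF assms, where 'a=complex] by (simp add: sums_iff)

lemma holomorphic_eq_on_real_discs:
  fixes g1 g2 :: "complex \<Rightarrow> complex"
  assumes hol: "g1 holomorphic_on ball (of_real y1) d1" "g2 holomorphic_on ball (of_real y2) d2"
    and real_eq: "\<And>u. (of_real u :: complex) \<in> ball (of_real y1) d1 \<inter> ball (of_real y2) d2 \<Longrightarrow> g1 (of_real u) = g2 (of_real u)"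
    and z: "z \<in> ball (of_real y1) d1 \<inter> ball (of_real y2) d2"
  shows "g1 z = g2 z"
proof -
  define W where "W = (ball (of_real y1) d1 \<inter> ball (of_real y2) d2 :: complex set)"
  have "open W" "connected W" unfolding W_def by (auto intro: convex_connected convex_Int)
  have hW: "(\<lambda>w. g1 w - g2 w) holomorphic_on W"
    unfolding W_def by (intro holomorphic_on_diff; rule holomorphic_on_subset[OF hol(1)] holomorphic_on_subset[OF hol(2)]) auto
  \<comment> \<open>the real part of \<open>z\<close> lies in \<open>W\<close> and is a limit point of the real points of \<open>W\<close>\<close>
  define p where "p = Re z"
  have "\<bar>yi - p\<bar> \<le> cmod (z - of_real yi)" for yi
    using abs_Re_le_cmod[of "z - of_real yi"] by (simp add: p_def abs_minus_commute)
  then have "\<bar>y1 - p\<bar> < d1" "\<bar>y2 - p\<bar> < d2"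
    using z by (auto simp: dist_norm norm_minus_commute intro: le_less_trans)
  then have pW: "of_real p \<in> W"
    unfolding W_def by (auto simp: dist_norm simp flip: of_real_diff)
  obtain \<epsilon> where \<epsilon>: "\<epsilon> > 0" "ball (of_real p) \<epsilon> \<subseteq> W" using \<open>open W\<close> pW open_contains_ball by blast
  define U where "U = (of_real ` {u. \<bar>u - p\<bar> < \<epsilon>} :: complex set)"
  have UW: "U \<subseteq> W"
    using \<epsilon> by (auto simp: U_def dist_norm abs_minus_commute simp flip: of_real_diff)
  have "g1 w - g2 w = 0" if w: "w \<in> U" for w
  proof -
    obtain u where "w = of_real u" using w by (auto simp: U_def)
    with w UW real_eq[of u] have "g1 w = g2 w" unfolding W_def by blast
    then show ?thesis by simp
  qed
  moreover have "of_real p islimpt U"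
  proof (rule islimpt_approachable[THEN iffD2], intro allI impI)
    fix e :: real assume e: "e > 0"
    define d where "d = min e \<epsilon> / 2"
    have d: "0 < d" "d < e" "d < \<epsilon>" using e \<epsilon> by (auto simp: d_def)
    have "of_real (p + d) \<in> U" unfolding U_def by (rule imageI) (use d in simp)
    moreover have "of_real (p + d) \<noteq> (of_real p :: complex)"
      "dist (of_real (p + d)) (of_real p :: complex) < e"
      using d by (auto simp: dist_norm)
    ultimately show "\<exists>x'\<in>U. x' \<noteq> of_real p \<and> dist x' (of_real p) < e" by blast
  qed
  ultimately have "g1 z - g2 z = 0"
    using analytic_continuation[OF hW \<open>open W\<close> \<open>connected W\<close> UW pW] z by (auto simp: W_def)
  then show ?thesis by simp
qed

lemma real_analytic_on_holomorphic_extension: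
  assumes an: "real_analytic_on f {a..b}"
  obtains U F where "open U" "\<And>y. y \<in> {a..b} \<Longrightarrow> of_real y \<in> U" "F holomorphic_on U"
    "\<And>y. y \<in> {a..b} \<Longrightarrow> F (of_real y) = of_real (f y)"
proof -
  have ex: "\<forall>y\<in>{a..b}. \<exists>p. fst p > 0 \<and> (\<forall>u. \<bar>u - y\<bar> < fst p \<longrightarrow> (\<lambda>k. snd p k * (u - y) ^ k) sums f u)"
    using an unfolding real_analytic_on_def real_analytic_at_def by fastforce
  from bchoice[OF ex] obtain p where p: "\<forall>y\<in>{a..b}. fst (p y) > 0 \<and>
      (\<forall>u. \<bar>u - y\<bar> < fst (p y) \<longrightarrow> (\<lambda>k. snd (p y) k * (u - y) ^ k) sums f u)"
    by blast
  define \<delta> where "\<delta> = fst \<circ> p"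
  define c where "c = snd \<circ> p"
  have \<delta>: "\<And>y. y \<in> {a..b} \<Longrightarrow> \<delta> y > 0"
    and ser: "\<And>y u. y \<in> {a..b} \<Longrightarrow> \<bar>u - y\<bar> < \<delta> y \<Longrightarrow> (\<lambda>k. c y k * (u - y) ^ k) sums f u"
    using p by (auto simp: \<delta>_def c_def)
  define P where "P = (\<lambda>y w. \<Sum>k. of_real (c y k) * (w - of_real y) ^ k :: complex)"
  have Phol: "P y holomorphic_on ball (of_real y) (\<delta> y)" if "y \<in> {a..b}" for y
    unfolding P_def by (rule holomorphic_complexified_power_series[OF ser[OF that]])
  have P_real: "P y (of_real u) = of_real (f u)" if "y \<in> {a..b}" "\<bar>u - y\<bar> < \<delta> y" for y u
    unfolding P_def by (rule complexified_power_series_of_real) (rule ser[OF that])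
  have P_agree: "P y1 z = P y2 z" if "y1 \<in> {a..b}" "y2 \<in> {a..b}"
    and "z \<in> ball (of_real y1) (\<delta> y1) \<inter> ball (of_real y2) (\<delta> y2)" for y1 y2 z
  proof (rule holomorphic_eq_on_real_discs[OF Phol Phol _ that(3)])
    fix u assume "(of_real u :: complex) \<in> ball (of_real y1) (\<delta> y1) \<inter> ball (of_real y2) (\<delta> y2)"
    then have "\<bar>u - y1\<bar> < \<delta> y1" "\<bar>u - y2\<bar> < \<delta> y2" by (auto simp: dist_norm abs_minus_commute simp flip: of_real_diff)
    then show "P y1 (of_real u) = P y2 (of_real u)"
      using P_real that by simp
  qed (use that in auto)
  define U where "U = ((\<Union>y\<in>{a..b}. ball (of_real y) (\<delta> y)) :: complex set)"
  define F where "F = (\<lambda>z. P (SOME y. y \<in> {a..b} \<and> z \<in> ball (of_real y) (\<delta> y)) z)"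
  have FP: "F z = P y z" if "y \<in> {a..b}" "z \<in> ball (of_real y) (\<delta> y)" for y z
  proof -
    define y' where "y' = (SOME y. y \<in> {a..b} \<and> z \<in> ball (of_real y) (\<delta> y))"
    have "y' \<in> {a..b} \<and> z \<in> ball (of_real y') (\<delta> y')" unfolding y'_def by (rule someI) (use that in blast)
    then show ?thesis using P_agree[of y' y z] that by (simp add: F_def y'_def)
  qed
  have "open U" unfolding U_def by auto
  moreover have "of_real y \<in> U" if "y \<in> {a..b}" for y using that \<delta>[OF that] unfolding U_def by force
  moreover have "F holomorphic_on U"
    unfolding U_def
  proof (rule holomorphic_on_UN_open)
    fix y assume y: "y \<in> {a..b}"
    show "F holomorphic_on ball (of_real y) (\<delta> y)"
      by (rule holomorphic_transform[OF Phol[OF y]]) (use FP[OF y] in auto)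
  qed auto
  moreover have "F (of_real y) = of_real (f y)" if "y \<in> {a..b}" for y
    using FP[OF that, of "of_real y"] P_real[OF that, of y] \<delta>[OF that] by simp
  ultimately show ?thesis using that by blast
qed

lemma mult_in_min_max_interval: assumes "t \<in> {0..1::real}" shows "x * t \<in> {min 0 x..max 0 x}"
proof (cases "x \<ge> 0")
  case True
  have "0 \<le> x * t" using True assms by simp
  moreover have "x * t \<le> x * 1" using True assms by (intro mult_left_mono) auto
  ultimately show ?thesis using True by simp
next
  case False
  have "x * t \<le> 0" using False assms by (simp add: mult_nonpos_nonneg)
  moreover have "x * 1 \<le> x * t" using False assms by (intro mult_left_mono_neg) auto
  ultimately show ?thesis using False by simp
qed

lemma pos_if_continuous_nonzero:
  fixes g :: "real \<Rightarrow> real"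
  assumes "continuous_on {a..b} g" "\<And>t. t \<in> {a..b} \<Longrightarrow> g t \<noteq> 0" "g a > 0" "t \<in> {a..b}"
  shows "g t > 0"
proof (rule ccontr)
  assume "\<not> g t > 0"
  moreover have "0 \<le> g a" "a \<le> t" "continuous_on {a..t} g"
    using assms continuous_on_subset[OF assms(1), of "{a..t}"] by auto
  ultimately obtain s where "a \<le> s" "s \<le> t" "g s = 0"
    using IVT2'[of g t 0 a] by auto
  then show False using assms(2,4) by auto
qed

lemma holomorphic_extension_along_segment:
  assumes an: "real_analytic_on f {min 0 x..max 0 x}" and nz: "\<forall>y\<in>{min 0 x..max 0 x}. f y \<noteq> 0"
  obtains \<epsilon> G where "\<epsilon> > 0" "G holomorphic_on segment_nbhd \<epsilon>" "\<And>z. z \<in> segment_nbhd \<epsilon> \<Longrightarrow> G z \<noteq> 0"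
    "\<And>t. t \<in> {0..1} \<Longrightarrow> G (of_real t) = of_real (f (x * t))"
proof -
  obtain U F where U: "open U" "\<And>y. y \<in> {min 0 x..max 0 x} \<Longrightarrow> of_real y \<in> U" and
    Fh: "F holomorphic_on U" and Ff: "\<And>y. y \<in> {min 0 x..max 0 x} \<Longrightarrow> F (of_real y) = of_real (f y)"
    using real_analytic_on_holomorphic_extension[OF an] by blast
  define G where "G = (\<lambda>z. F (of_real x * z))"
  define U' where "U' = (\<lambda>z. of_real x * z) -` U"
  have "open U'"
    using continuous_open_preimage[of UNIV "\<lambda>z. of_real x * z" U] U(1) unfolding U'_def
    by (auto intro!: continuous_intros)
  have Gh: "G holomorphic_on U'"
  proof -
    have "(\<lambda>z. of_real x * z) holomorphic_on U'" by (intro holomorphic_intros)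
    moreover have "(\<lambda>z. of_real x * z) ` U' \<subseteq> U" by (auto simp: U'_def)
    ultimately show ?thesis unfolding G_def using holomorphic_on_compose_gen[OF _ Fh] by (auto simp: o_def)
  qed
  define V where "V = U' \<inter> G -` (- {0})"
  have "open V" unfolding V_def
    by (rule continuous_open_preimage[OF holomorphic_on_imp_continuous_on[OF Gh] \<open>open U'\<close>]) auto
  have Gt: "G (of_real t) = of_real (f (x * t))" if "t \<in> {0..1}" for t
    using Ff[OF mult_in_min_max_interval[OF that]] by (simp add: G_def)
  have CV: "of_real ` {0..1} \<subseteq> V"
  proof
    fix z assume "z \<in> (of_real ` {0..1} :: complex set)"
    then obtain t where t: "t \<in> {0..1}" "z = of_real t" by auto
    have "of_real x * z \<in> U" using U(2)[OF mult_in_min_max_interval[OF t(1)]] t by simp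
    moreover have "G z \<noteq> 0" using Gt[OF t(1)] nz mult_in_min_max_interval[OF t(1)] t by simp
    ultimately show "z \<in> V" by (simp add: V_def U'_def)
  qed
  have "compact (of_real ` {0..1} :: complex set)"
    by (intro compact_continuous_image continuous_intros compact_Icc)
  then obtain \<epsilon> where \<epsilon>: "\<epsilon> > 0" "(\<Union>z\<in>of_real ` {0..1}. ball z \<epsilon>) \<subseteq> V"
    using compact_subset_open_imp_ball_epsilon_subset[OF _ \<open>open V\<close> CV] by blast
  then have DV: "segment_nbhd \<epsilon> \<subseteq> V" unfolding segment_nbhd_eq_UN by auto
  show ?thesis
  proof (rule that[OF \<epsilon>(1) _ _ Gt])
    show "G holomorphic_on segment_nbhd \<epsilon>" using Gh DV holomorphic_on_subset unfolding V_def by blast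
    show "G z \<noteq> 0" if "z \<in> segment_nbhd \<epsilon>" for z using DV that unfolding V_def by auto
  qed
qed

lemma holomorphic_log_extension:
  assumes an: "real_analytic_on f {min 0 x..max 0 x}" and nz: "\<forall>y\<in>{min 0 x..max 0 x}. f y \<noteq> 0"
    and f0: "f 0 = 1"
  obtains \<epsilon> \<phi> where "\<epsilon> > 0" "\<phi> holomorphic_on segment_nbhd \<epsilon>" "\<phi> 0 = 0"
    "\<And>t. t \<in> {0..1} \<Longrightarrow> f (x * t) > 0 \<and> Re (\<phi> (of_real t)) = ln (f (x * t))"
proof -
  obtain \<epsilon> G where \<epsilon>: "\<epsilon> > 0" and GhD: "G holomorphic_on segment_nbhd \<epsilon>"
    and GnzD: "\<And>z. z \<in> segment_nbhd \<epsilon> \<Longrightarrow> G z \<noteq> 0"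
    and Gt: "\<And>t. t \<in> {0..1} \<Longrightarrow> G (of_real t) = of_real (f (x * t))"
    using holomorphic_extension_along_segment[OF an nz] by blast
  have z0: "0 \<in> segment_nbhd \<epsilon>" using \<epsilon> by (rule zero_in_segment_nbhd)
  obtain g where gh: "g holomorphic_on segment_nbhd \<epsilon>" and ge: "\<And>z. z \<in> segment_nbhd \<epsilon> \<Longrightarrow> exp (g z) = G z"
    using holomorphic_logarithm_exists[OF convex_segment_nbhd open_segment_nbhd GhD GnzD z0] by blast
  define \<phi> where "\<phi> = (\<lambda>z. g z - g 0)"
  have G0: "G 0 = 1" using Gt[of 0] f0 by simp
  have \<phi>h: "\<phi> holomorphic_on segment_nbhd \<epsilon>" unfolding \<phi>_def by (intro holomorphic_intros gh)
  have \<phi>e: "exp (\<phi> z) = G z" if "z \<in> segment_nbhd \<epsilon>" for z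
    using ge[OF that] ge[OF z0] G0 by (simp add: \<phi>_def exp_diff)
  have "continuous_on {0..1} (\<lambda>t. f (x * t))"
  proof -
    have "of_real ` {0..1} \<subseteq> segment_nbhd \<epsilon>" using of_real_in_segment_nbhd \<epsilon> by auto
    then have "continuous_on {0..1} (G \<circ> of_real)"
      using holomorphic_on_imp_continuous_on[OF GhD]
      by (intro continuous_on_compose continuous_intros) (auto elim: continuous_on_subset)
    then have "continuous_on {0..1} (\<lambda>t. Re (G (of_real t)))"
      by (intro continuous_intros) (simp add: o_def)
    then show ?thesis by (rule continuous_on_eq) (simp add: Gt)
  qed
  then have pos: "f (x * t) > 0" if "t \<in> {0..1}" for t
    by (rule pos_if_continuous_nonzero[OF _ _ _ that]) (use nz mult_in_min_max_interval f0 in auto)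
  have "Re (\<phi> (of_real t)) = ln (f (x * t))" if t: "t \<in> {0..1}" for t
  proof -
    have "exp (\<phi> (of_real t)) = of_real (f (x * t))"
      using \<phi>e[OF of_real_in_segment_nbhd[OF \<epsilon> t]] Gt[OF t] by simp
    then have "exp (Re (\<phi> (of_real t))) = f (x * t)"
      using pos[OF t] by (metis norm_exp_eq_Re norm_of_real abs_of_pos)
    then show ?thesis by (metis ln_exp)
  qed
  then show ?thesis using that[OF \<epsilon> \<phi>h] pos by (simp add: \<phi>_def)
qed

section \<open>Taylor quotients\<close>

fun taylor_quotient :: "(complex \<Rightarrow> complex) \<Rightarrow> nat \<Rightarrow> complex \<Rightarrow> complex" where
  "taylor_quotient \<phi> 0 = \<phi>"
| "taylor_quotient \<phi> (Suc n) = (\<lambda>z. if z = 0 then deriv (taylor_quotient \<phi> n) 0 else (taylor_quotient \<phi> n z - taylor_quotient \<phi> n 0) / z)"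

lemma taylor_quotient_holomorphic:
  assumes "\<phi> holomorphic_on S" "open S" "0 \<in> S"
  shows "taylor_quotient \<phi> n holomorphic_on S"
proof (induction n)
  case 0 then show ?case using assms by simp
next
  case (Suc n)
  have "0 \<in> interior S" using assms by (simp add: interior_open)
  then show ?case using pole_lemma[OF Suc, of 0] by (simp only: taylor_quotient.simps diff_zero)
qed

lemma taylor_quotient_Suc_eq: "taylor_quotient \<phi> n z = taylor_quotient \<phi> n 0 + z * taylor_quotient \<phi> (Suc n) z"
  by (cases "z = 0") (auto simp: field_simps)

lemma taylor_quotient_expansion: "\<phi> z = (\<Sum>m<n. taylor_quotient \<phi> m 0 * z ^ m) + z ^ n * taylor_quotient \<phi> n z"
proof (induction n)
  case 0 then show ?case by simp
next
  case (Suc n)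
  then show ?case using taylor_quotient_Suc_eq[of \<phi> n z] by (simp add: algebra_simps)
qed

lemma taylor_quotient_expansion_0:
  assumes "\<phi> 0 = 0"
  shows "\<phi> z = (\<Sum>m\<in>{1..K}. taylor_quotient \<phi> m 0 * z ^ m) + z ^ Suc K * taylor_quotient \<phi> (Suc K) z"
proof -
  have "{..<Suc K} = insert 0 {1..K}" by auto
  then have "(\<Sum>m<Suc K. taylor_quotient \<phi> m 0 * z ^ m) = (\<Sum>m\<in>{1..K}. taylor_quotient \<phi> m 0 * z ^ m)"
    using assms by simp
  then show ?thesis using taylor_quotient_expansion[of \<phi> z "Suc K"] by simp
qed

section \<open>Dilation series and their alternating sums\<close>

text \<open>\<open>beta r k = (1 - 1 / r ^ k) powr (1 / k)\<close>, so that
  \<open>xn S r x (i + card S) = x * beta_prod r S / r ^ i\<close>.\<close>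
definition beta :: "real \<Rightarrow> nat \<Rightarrow> real" where "beta r k = (r ^ k - 1) powr (1 / real k) / r"

definition beta_prod :: "real \<Rightarrow> nat set \<Rightarrow> real" where "beta_prod r S = (\<Prod>k\<in>S. beta r k)"

text \<open>For \<open>h\<close> a logarithm of \<open>t \<mapsto> f (x t)\<close>, \<open>Re (dilation_series r h S 1) = ln (Pf f S r x)\<close>
  and \<open>Re (h 1 - alternating_sum r N h 1) = ln (ratioN f N r x)\<close>.\<close>
definition dilation_series :: "real \<Rightarrow> (complex \<Rightarrow> complex) \<Rightarrow> nat set \<Rightarrow> complex \<Rightarrow> complex" where
  "dilation_series r h S z = (if S = {} then h z else
     (\<Sum>i. of_nat ((i + card S - 1) choose (card S - 1)) * h (z * of_real (beta_prod r S / r ^ i))))"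

definition alternating_sum :: "real \<Rightarrow> nat \<Rightarrow> (complex \<Rightarrow> complex) \<Rightarrow> complex \<Rightarrow> complex" where
  "alternating_sum r N h z = (\<Sum>S\<in>Pow {1..N}. (-1) ^ card S * dilation_series r h S z)"

definition ray_bound :: "(complex \<Rightarrow> complex) \<Rightarrow> complex \<Rightarrow> real \<Rightarrow> bool" where
  "ray_bound h z C \<longleftrightarrow> (\<forall>t. 0 < t \<and> t \<le> 1 \<longrightarrow> cmod (h (z * of_real t)) \<le> C * t)"

lemma beta_power: assumes "r > 1" "k \<ge> 1" shows "beta r k ^ k = 1 - 1 / r ^ k"
proof -
  have pos: "r ^ k - 1 > 0" using assms by (simp add: one_less_power)
  have "((r ^ k - 1) powr (1 / real k)) ^ k = ((r ^ k - 1) powr (1 / real k)) powr (real k)"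
    using pos by (simp add: powr_realpow)
  also have "\<dots> = (r ^ k - 1) powr (1 / real k * real k)" by (simp add: powr_powr)
  also have "\<dots> = r ^ k - 1" using pos assms by simp
  finally have "((r ^ k - 1) powr (1 / real k)) ^ k = r ^ k - 1" .
  then show ?thesis using assms by (simp add: beta_def power_divide field_simps)
qed

lemma beta_pos: assumes "r > 1" "k \<ge> 1" shows "beta r k > 0"
proof -
  have "r ^ k - 1 > 0" using assms by (simp add: one_less_power)
  then have "(r ^ k - 1) powr (1 / real k) > 0" by simp
  then show ?thesis using assms unfolding beta_def by (simp add: divide_pos_pos)
qed

lemma beta_le_1: assumes "r > 1" "k \<ge> 1" shows "beta r k \<le> 1"
proof (rule ccontr)
  assume "\<not> beta r k \<le> 1"
  then have "1 < beta r k" by simp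
  then have "1 < beta r k ^ k" using assms(2) by (intro one_less_power) auto
  moreover have "r ^ k > 0" using assms by simp
  then have "1 / r ^ k > 0" by simp
  ultimately show False using beta_power[OF assms] by linarith
qed

lemma one_minus_beta_le: assumes "r > 1" "k \<ge> 1" shows "1 - beta r k \<le> 1 / r ^ k"
proof -
  have "beta r k ^ k \<le> beta r k ^ 1"
    using assms beta_pos[OF assms] beta_le_1[OF assms] by (intro power_decreasing) auto
  then show ?thesis using beta_power[OF assms] by simp
qed

lemma beta_prod_pos: assumes "r > 1" "0 \<notin> S" shows "beta_prod r S > 0"
  unfolding beta_prod_def using beta_pos[OF assms(1)] assms(2) by (intro prod_pos) (metis less_one not_le)

lemma beta_prod_le_1: assumes "r > 1" "0 \<notin> S" shows "beta_prod r S \<le> 1"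
  unfolding beta_prod_def
proof (intro prod_le_1 conjI)
  fix x assume "x \<in> S"
  then have "x \<ge> 1" using assms(2) by (metis less_one not_le)
  then show "0 \<le> beta r x" "beta r x \<le> 1" using beta_pos[OF assms(1)] beta_le_1[OF assms(1)] less_imp_le by auto
qed

lemma dilation_factor_bounds:
  fixes r b :: real
  assumes "r > 1" "0 < b" "b \<le> 1"
  shows "0 < b / r ^ j \<and> b / r ^ j \<le> 1"
proof -
  have "0 < b / r ^ j" using assms by simp
  moreover have "b \<le> r ^ j" using assms one_le_power[of r j] by linarith
  then have "b / r ^ j \<le> 1" using assms by simp
  ultimately show ?thesis by simp
qed

lemma ray_bound_summable:
  assumes "ray_bound h z C" "r > 1" "0 < B" "B \<le> 1"
  shows "summable (\<lambda>i. real ((i + s) choose s) * norm (h (z * of_real (B / r ^ i))))"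
proof (rule summable_comparison_test')
  show "summable (\<lambda>i. (C * B) * (real ((i + s) choose s) * (1 / r) ^ i))"
    using assms by (intro summable_mult summable_choose_mult_power) auto
  fix i
  have "cmod (h (z * of_real (B / r ^ i))) \<le> C * (B / r ^ i)"
    using assms(1) dilation_factor_bounds[OF assms(2-4), of i] unfolding ray_bound_def by blast
  then have "real ((i + s) choose s) * norm (h (z * of_real (B / r ^ i))) \<le> real ((i + s) choose s) * (C * (B / r ^ i))"
    by (intro mult_left_mono) auto
  then show "norm (real ((i + s) choose s) * norm (h (z * of_real (B / r ^ i)))) \<le> (C * B) * (real ((i + s) choose s) * (1 / r) ^ i)"
    by (simp add: power_one_over field_simps)
qed

lemma dilation_series_insert:
  assumes "ray_bound h z C" "r > 1" "finite S" "0 \<notin> S" "m \<ge> 1" "m \<notin> S"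
  shows "(\<lambda>j. dilation_series r h S (z * of_real (beta r m / r ^ j))) sums dilation_series r h (insert m S) z"
proof (cases "S = {}")
  case True
  have b: "0 < beta r m" "beta r m \<le> 1" using beta_pos[OF assms(2,5)] beta_le_1[OF assms(2,5)] by auto
  have "summable (\<lambda>i. real ((i + 0) choose 0) * norm (h (z * of_real (beta r m / r ^ i))))"
    by (rule ray_bound_summable[OF assms(1,2) b])
  then have "summable (\<lambda>i. norm (h (z * of_real (beta r m / r ^ i))))" by simp
  then have "summable (\<lambda>i. h (z * of_real (beta r m / r ^ i)))"
    by (rule summable_norm_cancel)
  then show ?thesis using True by (simp add: dilation_series_def beta_prod_def summable_sums)
next
  case False
  then obtain t where t: "card S = Suc t" using assms(3) by (metis card_0_eq not0_implies_Suc)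
  define B where "B = beta_prod r S"
  define b where "b = beta r m"
  have B: "0 < B" "B \<le> 1" using beta_prod_pos beta_prod_le_1 assms by (auto simp: B_def)
  have b: "0 < b" "b \<le> 1" using beta_pos[OF assms(2,5)] beta_le_1[OF assms(2,5)] by (auto simp: b_def)
  define G where "G = (\<lambda>n. h (z * of_real (b * B / r ^ n)))"
  have sG: "summable (\<lambda>n. real ((n + Suc t) choose Suc t) * norm (G n))"
    unfolding G_def using B b by (intro ray_bound_summable[OF assms(1,2)]) (auto simp: mult_le_one)
  have eq1: "dilation_series r h S (z * of_real (b / r ^ j)) = (\<Sum>i. of_nat ((i + t) choose t) * G (i + j))" for j
  proof -
    have "z * of_real (b / r ^ j) * of_real (B / r ^ i) = z * of_real (b * B / r ^ (i + j))" for i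
      by (simp add: power_add field_simps)
    then show ?thesis using False t by (simp add: dilation_series_def G_def B_def)
  qed
  have eq2: "dilation_series r h (insert m S) z = (\<Sum>n. of_nat ((n + Suc t) choose Suc t) * G n)"
  proof -
    have "card (insert m S) = Suc (Suc t)" using t assms by simp
    moreover have "beta_prod r (insert m S) = b * B" using assms by (simp add: beta_prod_def B_def b_def)
    ultimately show ?thesis by (simp add: dilation_series_def G_def)
  qed
  show ?thesis unfolding eq2 b_def[symmetric] eq1 by (rule sums_choose_double_series[OF sG])
qed

lemma alternating_sum_Suc:
  "alternating_sum r (Suc N) h z
     = alternating_sum r N h z - (\<Sum>S\<in>Pow {1..N}. (-1) ^ card S * dilation_series r h (insert (Suc N) S) z)"
proof -
  have pw: "Pow {1..Suc N} = Pow {1..N} \<union> insert (Suc N) ` Pow {1..N}"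
    by (simp add: atLeastAtMostSuc_conv Pow_insert)
  have inj: "inj_on (insert (Suc N)) (Pow {1..N})"
    by (rule inj_onI) (metis Pow_iff atLeastAtMost_iff insert_ident not_less_eq_eq order_refl subset_iff)
  have "alternating_sum r (Suc N) h z
      = alternating_sum r N h z + (\<Sum>S\<in>insert (Suc N) ` Pow {1..N}. (-1) ^ card S * dilation_series r h S z)"
    unfolding alternating_sum_def pw by (rule sum.union_disjoint) auto
  also have "(\<Sum>S\<in>insert (Suc N) ` Pow {1..N}. (-1) ^ card S * dilation_series r h S z)
      = (\<Sum>S\<in>Pow {1..N}. - ((-1) ^ card S * dilation_series r h (insert (Suc N) S) z))"
  proof (rule sum.reindex_cong[OF inj refl])
    fix S assume "S \<in> Pow {1..N}"
    then have "finite S" "Suc N \<notin> S" using finite_subset by auto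
    then show "(-1) ^ card (insert (Suc N) S) * dilation_series r h (insert (Suc N) S) z
        = - ((-1) ^ card S * dilation_series r h (insert (Suc N) S) z)" by simp
  qed
  finally show ?thesis by (simp add: sum_negf)
qed

lemma alternating_sum_Suc_sums:
  assumes "ray_bound h z C" "r > 1"
  shows "(\<lambda>j. alternating_sum r N h (z * of_real (beta r (Suc N) / r ^ j)))
           sums (alternating_sum r N h z - alternating_sum r (Suc N) h z)"
proof -
  have "(\<lambda>j. dilation_series r h S (z * of_real (beta r (Suc N) / r ^ j)))
      sums dilation_series r h (insert (Suc N) S) z" if "S \<in> Pow {1..N}" for S
  proof -
    have "finite S" "0 \<notin> S" "Suc N \<notin> S" using that finite_subset by auto
    then show ?thesis by (intro dilation_series_insert[OF assms]) auto
  qed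
  then have "(\<lambda>j. \<Sum>S\<in>Pow {1..N}. (-1) ^ card S * dilation_series r h S (z * of_real (beta r (Suc N) / r ^ j)))
      sums (\<Sum>S\<in>Pow {1..N}. (-1) ^ card S * dilation_series r h (insert (Suc N) S) z)"
    by (intro sums_sum sums_mult)
  then show ?thesis unfolding alternating_sum_Suc by (simp add: alternating_sum_def)
qed

section \<open>The remainder operator\<close>

definition geom_factor :: "real \<Rightarrow> nat \<Rightarrow> real" where "geom_factor r m = 1 / (1 - 1 / r ^ m)"

text \<open>The alternating sum of the monomial \<open>z ^ m\<close> is \<open>coeff_factor r N m * z ^ m\<close>; its factor \<open>k = m\<close>
  vanishes by \<open>beta_power\<close>, which is why only the remainder of a Taylor expansion survives.\<close>
definition coeff_factor :: "real \<Rightarrow> nat \<Rightarrow> nat \<Rightarrow> real" where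
  "coeff_factor r N m = (\<Prod>k\<in>{1..N}. 1 - beta r k ^ m * geom_factor r m)"

definition dilation_sum :: "real \<Rightarrow> nat \<Rightarrow> real \<Rightarrow> (complex \<Rightarrow> complex) \<Rightarrow> complex \<Rightarrow> complex" where
  "dilation_sum r K b \<Psi> z = (\<Sum>j. of_real ((b / r ^ j) ^ Suc K) * \<Psi> (z * of_real (b / r ^ j)))"

definition remainder_step :: "real \<Rightarrow> nat \<Rightarrow> real \<Rightarrow> (complex \<Rightarrow> complex) \<Rightarrow> complex \<Rightarrow> complex" where
  "remainder_step r K b \<Psi> z = \<Psi> z - dilation_sum r K b \<Psi> z"

fun remainder :: "real \<Rightarrow> nat \<Rightarrow> (complex \<Rightarrow> complex) \<Rightarrow> nat \<Rightarrow> complex \<Rightarrow> complex" where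
  "remainder r K \<psi> 0 = \<psi>"
| "remainder r K \<psi> (Suc N) = remainder_step r K (beta r (Suc N)) (remainder r K \<psi> N)"

lemma sums_power_dilation: assumes "r > 1" "m \<ge> 1"
  shows "(\<lambda>j. (b / r ^ j) ^ m) sums (b ^ m * geom_factor r m)"
proof -
  have q: "norm (1 / r ^ m) < 1" using assms by (simp add: one_less_power)
  have "(\<lambda>j. b ^ m * (1 / r ^ m) ^ j) sums (b ^ m * (1 / (1 - 1 / r ^ m)))"
    by (rule sums_mult[OF geometric_sums[OF q]])
  moreover have "b ^ m * (1 / r ^ m) ^ j = (b / r ^ j) ^ m" for j
    by (simp add: power_divide power_mult[symmetric] mult.commute)
  ultimately show ?thesis by (simp add: geom_factor_def)
qed

lemma geom_factor_pos: assumes "r > 1" "m \<ge> 1" shows "geom_factor r m > 0"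
  using assms by (simp add: geom_factor_def one_less_power)

lemma geom_factor_minus_1:
  assumes "r > 1" "m \<ge> 1" shows "geom_factor r m - 1 = geom_factor r m / r ^ m"
proof -
  have "r ^ m > 1" using assms by (simp add: one_less_power)
  then show ?thesis by (simp add: geom_factor_def field_simps)
qed

lemma norm_dilation_term_le:
  assumes D: "scaling_closed D" and M: "\<And>w. w \<in> D \<Longrightarrow> cmod (\<Psi> w) \<le> M"
    and r: "r > 1" and b: "0 < b" "b \<le> 1" and z: "z \<in> D"
  shows "norm (of_real ((b / r ^ j) ^ Suc K) * \<Psi> (z * of_real (b / r ^ j))) \<le> (b / r ^ j) ^ Suc K * M"
proof -
  have cj: "0 < b / r ^ j" "b / r ^ j \<le> 1" using dilation_factor_bounds[OF r b] by auto
  then have "z * of_real (b / r ^ j) \<in> D" using D z unfolding scaling_closed_def by (meson less_imp_le)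
  then have "cmod (\<Psi> (z * of_real (b / r ^ j))) \<le> M" by (rule M)
  moreover have "0 \<le> (b / r ^ j) ^ Suc K" using cj(1) by (intro zero_le_power less_imp_le)
  moreover have "norm (of_real ((b / r ^ j) ^ Suc K) * \<Psi> (z * of_real (b / r ^ j)))
      = (b / r ^ j) ^ Suc K * cmod (\<Psi> (z * of_real (b / r ^ j)))"
    using cj by (simp only: norm_mult norm_of_real abs_of_nonneg zero_le_power less_imp_le)
  ultimately show ?thesis by (simp only: mult_left_mono)
qed

lemma dilation_sum_bound:
  assumes D: "scaling_closed D" and M: "\<And>w. w \<in> D \<Longrightarrow> cmod (\<Psi> w) \<le> M"
    and r: "r > 1" and b: "0 < b" "b \<le> 1" and z: "z \<in> D"
  shows "summable (\<lambda>j. of_real ((b / r ^ j) ^ Suc K) * \<Psi> (z * of_real (b / r ^ j)))"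
    and "cmod (dilation_sum r K b \<Psi> z) \<le> b ^ Suc K * geom_factor r (Suc K) * M"
proof -
  have g: "(\<lambda>j. (b / r ^ j) ^ Suc K * M) sums (b ^ Suc K * geom_factor r (Suc K) * M)"
    by (rule sums_mult2[OF sums_power_dilation[OF r]]) simp
  note nb = norm_dilation_term_le[where \<Psi>=\<Psi>, OF D M r b z]
  have sn: "summable (\<lambda>j. norm (of_real ((b / r ^ j) ^ Suc K) * \<Psi> (z * of_real (b / r ^ j))))"
    by (rule summable_comparison_test'[OF sums_summable[OF g]])
       (simp only: norm_ge_zero real_norm_def abs_of_nonneg nb)
  then show "summable (\<lambda>j. of_real ((b / r ^ j) ^ Suc K) * \<Psi> (z * of_real (b / r ^ j)))"
    by (rule summable_norm_cancel)
  have "cmod (dilation_sum r K b \<Psi> z) \<le> (\<Sum>j. norm (of_real ((b / r ^ j) ^ Suc K) * \<Psi> (z * of_real (b / r ^ j))))"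
    unfolding dilation_sum_def by (rule summable_norm[OF sn])
  also have "\<dots> \<le> (\<Sum>j. (b / r ^ j) ^ Suc K * M)"
    by (rule suminf_le[OF nb sn sums_summable[OF g]])
  also have "\<dots> = b ^ Suc K * geom_factor r (Suc K) * M" using g by (simp add: sums_iff)
  finally show "cmod (dilation_sum r K b \<Psi> z) \<le> b ^ Suc K * geom_factor r (Suc K) * M" .
qed

lemma dilation_sum_split_head:
  assumes "summable (\<lambda>j. of_real ((b / r ^ j) ^ Suc K) * \<Psi> (z * of_real (b / r ^ j)))"
  shows "dilation_sum r K b \<Psi> z = of_real (b ^ Suc K) * \<Psi> (z * of_real b) + dilation_sum r K (b / r) \<Psi> z"
proof -
  have "b / r ^ Suc j = b / r / r ^ j" for j by simp
  then show ?thesis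
    using suminf_split_head[OF assms] by (simp add: dilation_sum_def)
qed

lemma remainder_bounded:
  assumes D: "scaling_closed D" and M: "\<And>w. w \<in> D \<Longrightarrow> cmod (\<psi> w) \<le> M" and r: "r > 1"
  shows "\<exists>M'. \<forall>w\<in>D. cmod (remainder r K \<psi> N w) \<le> M'"
proof (induction N)
  case 0 then show ?case using M by auto
next
  case (Suc N)
  then obtain M' where M': "\<And>w. w \<in> D \<Longrightarrow> cmod (remainder r K \<psi> N w) \<le> M'" by blast
  have "cmod (remainder r K \<psi> (Suc N) w) \<le> M' + geom_factor r (Suc K) * M'" if "w \<in> D" for w
  proof -
    have b: "0 < beta r (Suc N)" "beta r (Suc N) \<le> 1" using beta_pos[OF r] beta_le_1[OF r] by auto
    have "0 \<le> M'" using M'[OF that] norm_ge_zero order_trans by blast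
    moreover have "beta r (Suc N) ^ Suc K \<le> 1" using b power_le_one[of "beta r (Suc N)" "Suc K"] by simp
    ultimately have "beta r (Suc N) ^ Suc K * (geom_factor r (Suc K) * M') \<le> 1 * (geom_factor r (Suc K) * M')"
      using geom_factor_pos[OF r, of "Suc K"] by (intro mult_right_mono) auto
    then have "beta r (Suc N) ^ Suc K * geom_factor r (Suc K) * M' \<le> geom_factor r (Suc K) * M'"
      by (simp only: mult.assoc mult_1)
    moreover have "cmod (dilation_sum r K (beta r (Suc N)) (remainder r K \<psi> N) w)
        \<le> beta r (Suc N) ^ Suc K * geom_factor r (Suc K) * M'"
      by (rule dilation_sum_bound(2)[where \<Psi>="remainder r K \<psi> N" and M=M', OF D _ r b that]) (rule M')
    ultimately show ?thesis
      using norm_triangle_ineq4[of "remainder r K \<psi> N w" "dilation_sum r K (beta r (Suc N)) (remainder r K \<psi> N) w"]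
        M'[OF that]
      unfolding remainder.simps remainder_step_def by linarith
  qed
  then show ?case by blast
qed

lemma coeff_factor_Suc:
  "coeff_factor r (Suc N) m = coeff_factor r N m * (1 - beta r (Suc N) ^ m * geom_factor r m)"
proof -
  have "{1..Suc N} = insert (Suc N) {1..N}" by auto
  then show ?thesis by (simp add: coeff_factor_def mult.commute)
qed

lemma coeff_factor_eq_0: assumes "r > 1" "1 \<le> m" "m \<le> N" shows "coeff_factor r N m = 0"
proof -
  have "1 < r ^ m" using assms by (simp add: one_less_power)
  then have "1 - 1 / r ^ m \<noteq> 0" by simp
  then have "1 - beta r m ^ m * geom_factor r m = 0" using beta_power[OF assms(1,2)] by (simp add: geom_factor_def)
  then show ?thesis unfolding coeff_factor_def using assms by (intro prod_zero) auto
qed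

lemma ray_bound_of_expansion:
  assumes D: "scaling_closed D" and \<psi>M: "\<And>w. w \<in> D \<Longrightarrow> cmod (\<psi> w) \<le> M"
    and \<phi>: "\<And>z. z \<in> D \<Longrightarrow> \<phi> z = (\<Sum>m\<in>{1..K}. a m * z ^ m) + z ^ Suc K * \<psi> z"
    and z: "z \<in> D"
  shows "ray_bound \<phi> z ((\<Sum>m\<in>{1..K}. cmod (a m) * cmod z ^ m) + cmod z ^ Suc K * M)"
  unfolding ray_bound_def
proof (intro allI impI)
  fix t :: real assume t: "0 < t \<and> t \<le> 1"
  have zt: "z * of_real t \<in> D" using D z t unfolding scaling_closed_def by auto
  have tp: "t ^ m \<le> t" if "m \<ge> 1" for m
    using t that power_decreasing[of 1 m t] by auto
  have "cmod (\<phi> (z * of_real t)) \<le> cmod (\<Sum>m\<in>{1..K}. a m * (z * of_real t) ^ m) + cmod ((z * of_real t) ^ Suc K * \<psi> (z * of_real t))"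
    unfolding \<phi>[OF zt] by (rule norm_triangle_ineq)
  also have "cmod (\<Sum>m\<in>{1..K}. a m * (z * of_real t) ^ m) \<le> (\<Sum>m\<in>{1..K}. cmod (a m) * cmod z ^ m * t)"
  proof (rule order_trans[OF norm_sum sum_mono])
    fix m assume "m \<in> {1..K}"
    then have "t ^ m \<le> t" by (intro tp) auto
    moreover have "cmod (a m * (z * of_real t) ^ m) = cmod (a m) * cmod z ^ m * t ^ m"
      using t by (simp add: norm_mult norm_power power_mult_distrib)
    ultimately show "cmod (a m * (z * of_real t) ^ m) \<le> cmod (a m) * cmod z ^ m * t"
      by (simp add: mult_left_mono)
  qed
  also have "cmod ((z * of_real t) ^ Suc K * \<psi> (z * of_real t)) \<le> cmod z ^ Suc K * M * t"
  proof -
    have "cmod ((z * of_real t) ^ Suc K * \<psi> (z * of_real t)) = cmod z ^ Suc K * t ^ Suc K * cmod (\<psi> (z * of_real t))"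
      using t by (simp add: norm_mult norm_power power_mult_distrib)
    also have "\<dots> \<le> cmod z ^ Suc K * t * M"
      using \<psi>M[OF zt] tp[of "Suc K"] t
      by (intro mult_mono) auto
    finally show ?thesis by (simp add: mult_ac)
  qed
  finally show "cmod (\<phi> (z * of_real t)) \<le> ((\<Sum>m\<in>{1..K}. cmod (a m) * cmod z ^ m) + cmod z ^ Suc K * M) * t"
    by (simp add: sum_distrib_right sum_distrib_left algebra_simps)
qed

lemma alternating_sum_expansion:
  assumes D: "scaling_closed D" and \<psi>M: "\<And>w. w \<in> D \<Longrightarrow> cmod (\<psi> w) \<le> M" and r: "r > 1"
    and \<phi>: "\<And>z. z \<in> D \<Longrightarrow> \<phi> z = (\<Sum>m\<in>{1..K}. a m * z ^ m) + z ^ Suc K * \<psi> z"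
  shows "z \<in> D \<Longrightarrow> alternating_sum r N \<phi> z
           = (\<Sum>m\<in>{1..K}. a m * of_real (coeff_factor r N m) * z ^ m) + z ^ Suc K * remainder r K \<psi> N z"
proof (induction N arbitrary: z)
  case 0
  have "Pow {1..0::nat} = {{}}" by auto
  then show ?case using \<phi>[OF 0] by (simp add: alternating_sum_def dilation_series_def coeff_factor_def)
next
  case (Suc N)
  note z = Suc.prems
  define b where "b = beta r (Suc N)"
  have b: "0 < b" "b \<le> 1" using beta_pos[OF r] beta_le_1[OF r] by (auto simp: b_def)
  have inD: "z * of_real (b / r ^ j) \<in> D" for j
    using D z dilation_factor_bounds[OF r b, of j] unfolding scaling_closed_def by (meson less_imp_le)
  obtain M' where M': "\<And>w. w \<in> D \<Longrightarrow> cmod (remainder r K \<psi> N w) \<le> M'"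
    using remainder_bounded[where \<psi>=\<psi> and M=M and K=K and N=N, OF D \<psi>M r] by blast
  define P where "P = (\<lambda>j. \<Sum>m\<in>{1..K}. a m * of_real (coeff_factor r N m) * z ^ m * of_real ((b / r ^ j) ^ m))"
  define Q where "Q = (\<lambda>j. z ^ Suc K * (of_real ((b / r ^ j) ^ Suc K) * remainder r K \<psi> N (z * of_real (b / r ^ j))))"
  define SP where "SP = (\<Sum>m\<in>{1..K}. a m * of_real (coeff_factor r N m) * z ^ m * of_real (b ^ m * geom_factor r m))"
  define SQ where "SQ = dilation_sum r K b (remainder r K \<psi> N) z"
  have "alternating_sum r N \<phi> (z * of_real (b / r ^ j)) = P j + Q j" for j
  proof -
    have "(z * of_real (b / r ^ j)) ^ m = z ^ m * of_real ((b / r ^ j) ^ m)" for m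
      by (simp only: power_mult_distrib of_real_power)
    then show ?thesis unfolding Suc.IH[OF inD] P_def Q_def by (simp add: mult_ac)
  qed
  then have "(\<lambda>j. P j + Q j) sums (alternating_sum r N \<phi> z - alternating_sum r (Suc N) \<phi> z)"
    using alternating_sum_Suc_sums[OF ray_bound_of_expansion[where \<psi>=\<psi>, OF D \<psi>M \<phi> z] r, of N] by (simp add: b_def)
  moreover have "P sums SP"
    unfolding P_def SP_def
    by (intro sums_sum sums_mult sums_of_real sums_power_dilation[OF r]) auto
  moreover have "Q sums (z ^ Suc K * SQ)"
    unfolding Q_def SQ_def dilation_sum_def
    by (intro sums_mult summable_sums dilation_sum_bound(1)[where \<Psi>="remainder r K \<psi> N", OF D M' r b z])
  ultimately have "alternating_sum r N \<phi> z - alternating_sum r (Suc N) \<phi> z = SP + z ^ Suc K * SQ"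
    using sums_unique2 sums_add by blast
  then have "alternating_sum r (Suc N) \<phi> z = alternating_sum r N \<phi> z - (SP + z ^ Suc K * SQ)"
    by (simp add: algebra_simps)
  also have "\<dots> = (\<Sum>m\<in>{1..K}. a m * of_real (coeff_factor r N m) * z ^ m
        - a m * of_real (coeff_factor r N m) * z ^ m * of_real (b ^ m * geom_factor r m))
      + z ^ Suc K * (remainder r K \<psi> N z - SQ)"
    unfolding Suc.IH[OF z] SP_def sum_subtractf by (simp add: algebra_simps)
  also have "(\<Sum>m\<in>{1..K}. a m * of_real (coeff_factor r N m) * z ^ m
        - a m * of_real (coeff_factor r N m) * z ^ m * of_real (b ^ m * geom_factor r m))
      = (\<Sum>m\<in>{1..K}. a m * of_real (coeff_factor r (Suc N) m) * z ^ m)"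
    unfolding coeff_factor_Suc b_def[symmetric] by (intro sum.cong refl) (simp add: algebra_simps)
  also have "remainder r K \<psi> N z - SQ = remainder r K \<psi> (Suc N) z"
    by (simp add: remainder_step_def SQ_def b_def)
  finally show ?case .
qed

section \<open>Decay of the remainder\<close>

lemma remainder_step_holomorphic:
  assumes hol: "\<Psi> holomorphic_on segment_nbhd e" and M: "\<And>w. w \<in> segment_nbhd e \<Longrightarrow> cmod (\<Psi> w) \<le> M"
    and r: "r > 1" and b: "0 < b" "b \<le> 1"
  shows "remainder_step r K b \<Psi> holomorphic_on segment_nbhd e"
proof -
  define f where "f = (\<lambda>n z. \<Sum>j<n. of_real ((b / r ^ j) ^ Suc K) * \<Psi> (z * of_real (b / r ^ j)))"
  have inD: "z * of_real (b / r ^ j) \<in> segment_nbhd e" if "z \<in> segment_nbhd e" for z j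
    using scaling_closed_segment_nbhd that dilation_factor_bounds[OF r b, of j]
    unfolding scaling_closed_def by (meson less_imp_le)
  have g: "(\<lambda>j. (b / r ^ j) ^ Suc K * M) sums (b ^ Suc K * geom_factor r (Suc K) * M)"
    by (rule sums_mult2[OF sums_power_dilation[OF r]]) simp
  have "\<forall>\<^sub>F j in sequentially. \<forall>z\<in>segment_nbhd e.
      norm (of_real ((b / r ^ j) ^ Suc K) * \<Psi> (z * of_real (b / r ^ j))) \<le> (b / r ^ j) ^ Suc K * M"
    using norm_dilation_term_le[where \<Psi>=\<Psi>, OF scaling_closed_segment_nbhd M r b] by (intro always_eventually) blast
  then have ul: "uniform_limit (segment_nbhd e) f (dilation_sum r K b \<Psi>) sequentially"
    unfolding f_def dilation_sum_def by (rule Weierstrass_m_test_ev[OF _ sums_summable[OF g]])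
  have "dilation_sum r K b \<Psi> holomorphic_on segment_nbhd e"
  proof (rule holomorphic_uniform_sequence[OF open_segment_nbhd])
    fix n
    have "(\<lambda>z. \<Psi> (z * of_real (b / r ^ j))) holomorphic_on segment_nbhd e" for j
    proof -
      have "(\<lambda>z. z * of_real (b / r ^ j)) holomorphic_on segment_nbhd e" by (intro holomorphic_intros)
      moreover have "(\<lambda>z. z * of_real (b / r ^ j)) ` segment_nbhd e \<subseteq> segment_nbhd e" using inD by auto
      ultimately show ?thesis using holomorphic_on_compose_gen[OF _ hol] unfolding o_def by blast
    qed
    then show "f n holomorphic_on segment_nbhd e" unfolding f_def by (intro holomorphic_intros)
  next
    fix x assume "x \<in> segment_nbhd e"
    then obtain d where d: "d > 0" "cball x d \<subseteq> segment_nbhd e"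
      using open_segment_nbhd open_contains_cball by blast
    then show "\<exists>d>0. cball x d \<subseteq> segment_nbhd e \<and> uniform_limit (cball x d) f (dilation_sum r K b \<Psi>) sequentially"
      using uniform_limit_on_subset[OF ul] by blast
  qed
  then show ?thesis
    unfolding remainder_step_def by (intro holomorphic_on_diff hol)
qed

lemma remainder_holomorphic_bounded:
  assumes r: "r > 1" and hol: "\<psi> holomorphic_on segment_nbhd e" and M: "\<And>w. w \<in> segment_nbhd e \<Longrightarrow> cmod (\<psi> w) \<le> M"
  shows "remainder r K \<psi> N holomorphic_on segment_nbhd e"
    and "\<exists>M'. \<forall>w\<in>segment_nbhd e. cmod (remainder r K \<psi> N w) \<le> M'"
proof -
  show bnd: "\<exists>M'. \<forall>w\<in>segment_nbhd e. cmod (remainder r K \<psi> n w) \<le> M'" for n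
    by (rule remainder_bounded[where \<psi>=\<psi>, OF scaling_closed_segment_nbhd M r])
  show "remainder r K \<psi> N holomorphic_on segment_nbhd e"
  proof (induction N)
    case (Suc N)
    obtain M' where M': "\<And>w. w \<in> segment_nbhd e \<Longrightarrow> cmod (remainder r K \<psi> N w) \<le> M'" using bnd by blast
    show ?case using remainder_step_holomorphic[OF Suc M' r beta_pos[OF r] beta_le_1[OF r]] by simp
  qed (simp add: hol)
qed

lemma norm_deriv_le_segment_nbhd:
  assumes hol: "\<Psi> holomorphic_on segment_nbhd e" and M: "\<And>w. w \<in> segment_nbhd e \<Longrightarrow> cmod (\<Psi> w) \<le> M"
    and e: "0 < e'" "e' < e" and w: "w \<in> segment_nbhd e'"
  shows "cmod (deriv \<Psi> w) \<le> 2 * M / (e - e')"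
proof -
  define \<rho> where "\<rho> = (e - e') / 2"
  have \<rho>: "\<rho> > 0" using e by (simp add: \<rho>_def)
  have "cball w \<rho> \<subseteq> ball w (e - e')" using e by (intro cball_subset_ball_iff[THEN iffD2]) (auto simp: \<rho>_def)
  then have C: "cball w \<rho> \<subseteq> segment_nbhd e" using ball_subset_segment_nbhd[OF w e(2)] by blast
  have "cmod ((deriv ^^ 1) \<Psi> w) \<le> fact 1 * M / \<rho> ^ 1"
  proof (rule Cauchy_inequality)
    show "\<Psi> holomorphic_on ball w \<rho>" using hol C ball_subset_cball by (meson holomorphic_on_subset subset_trans)
    show "continuous_on (cball w \<rho>) \<Psi>"
      using holomorphic_on_imp_continuous_on[OF hol] C by (rule continuous_on_subset)
    show "cmod (\<Psi> x) \<le> M" if "cmod (w - x) = \<rho>" for x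
      using that C M by (auto simp: dist_norm)
  qed (rule \<rho>)
  then show ?thesis by (simp add: \<rho>_def mult.commute)
qed

lemma norm_diff_dilation_le:
  assumes hol: "\<Psi> holomorphic_on segment_nbhd e" and M: "\<And>w. w \<in> segment_nbhd e \<Longrightarrow> cmod (\<Psi> w) \<le> M"
    and e: "0 < e'" "e' < e" and w: "w \<in> segment_nbhd e'" and b: "0 < b" "b \<le> 1"
  shows "cmod (\<Psi> w - \<Psi> (w * of_real b)) \<le> 2 * M / (e - e') * ((1 - b) * cmod w)"
proof -
  have wb: "w * of_real b \<in> segment_nbhd e'"
    using scaling_closed_segment_nbhd w b unfolding scaling_closed_def by auto
  have sub: "segment_nbhd e' \<subseteq> segment_nbhd e" using e by (intro segment_nbhd_mono) auto
  have "cmod (\<Psi> w - \<Psi> (w * of_real b)) \<le> 2 * M / (e - e') * cmod (w - w * of_real b)"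
  proof (rule field_differentiable_bound[OF convex_segment_nbhd])
    fix z assume z: "z \<in> segment_nbhd e'"
    then have "\<Psi> field_differentiable at z"
      using sub hol open_segment_nbhd holomorphic_on_imp_differentiable_at by blast
    then show "(\<Psi> has_field_derivative deriv \<Psi> z) (at z within segment_nbhd e')"
      using DERIV_deriv_iff_field_differentiable has_field_derivative_at_within by blast
    show "cmod (deriv \<Psi> z) \<le> 2 * M / (e - e')" by (rule norm_deriv_le_segment_nbhd[OF hol M e z])
  qed (use w wb in auto)
  also have "cmod (w - w * of_real b) = (1 - b) * cmod w"
  proof -
    have "w - w * of_real b = of_real (1 - b) * w" by (simp add: algebra_simps)
    then have "cmod (w - w * of_real b) = cmod (of_real (1 - b) :: complex) * cmod w" by (simp only: norm_mult)
    then show ?thesis using b by (simp only: norm_of_real)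
  qed
  finally show ?thesis .
qed

text \<open>Splitting off the first term of the dilation sum, the remaining terms form the dilation sum
  with \<open>b / r\<close>; so \<open>remainder_step\<close> is small where \<open>b\<close> is close to \<open>1\<close> and \<open>\<Psi>\<close> varies slowly.\<close>
lemma remainder_step_contraction:
  assumes hol: "\<Psi> holomorphic_on segment_nbhd e" and M: "\<And>w. w \<in> segment_nbhd e \<Longrightarrow> cmod (\<Psi> w) \<le> M"
    and e: "0 < e'" "e' < e" and z: "z \<in> segment_nbhd e'" and b: "0 < b" "b \<le> 1" and r: "r > 1"
  shows "cmod (remainder_step r K b \<Psi> z)
           \<le> ((1 - b ^ Suc K) + (geom_factor r (Suc K) - 1) + 2 / (e - e') * ((1 - b) * (1 + e))) * M"
proof -
  define \<sigma> where "\<sigma> = geom_factor r (Suc K)"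
  have zD: "z \<in> segment_nbhd e" using z segment_nbhd_mono[of e' e] e by auto
  have M0: "0 \<le> M" using M[OF zD] norm_ge_zero order_trans by blast
  have bK: "0 \<le> b ^ Suc K" "b ^ Suc K \<le> 1" using b power_le_one[of b "Suc K"] by auto
  have "dilation_sum r K b \<Psi> z = of_real (b ^ Suc K) * \<Psi> (z * of_real b) + dilation_sum r K (b / r) \<Psi> z"
    by (rule dilation_sum_split_head[OF dilation_sum_bound(1)[where \<Psi>=\<Psi>, OF scaling_closed_segment_nbhd M r b zD]])
  then have "remainder_step r K b \<Psi> z = of_real (1 - b ^ Suc K) * \<Psi> z
      + of_real (b ^ Suc K) * (\<Psi> z - \<Psi> (z * of_real b)) - dilation_sum r K (b / r) \<Psi> z"
    unfolding remainder_step_def by (simp add: algebra_simps)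
  moreover have "cmod (of_real (1 - b ^ Suc K) * \<Psi> z) \<le> (1 - b ^ Suc K) * M"
  proof -
    have "cmod (of_real (1 - b ^ Suc K) * \<Psi> z) = (1 - b ^ Suc K) * cmod (\<Psi> z)"
      using bK by (simp only: norm_mult norm_of_real abs_of_nonneg diff_ge_0_iff_ge)
    then show ?thesis using M[OF zD] bK by (simp add: mult_left_mono)
  qed
  moreover have "cmod (of_real (b ^ Suc K) * (\<Psi> z - \<Psi> (z * of_real b))) \<le> 2 / (e - e') * ((1 - b) * (1 + e)) * M"
  proof -
    have "cmod (of_real (b ^ Suc K) * (\<Psi> z - \<Psi> (z * of_real b))) = b ^ Suc K * cmod (\<Psi> z - \<Psi> (z * of_real b))"
      using bK by (simp only: norm_mult norm_of_real abs_of_nonneg)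
    also have "\<dots> \<le> cmod (\<Psi> z - \<Psi> (z * of_real b))"
      using bK by (intro mult_left_le_one_le) auto
    also have "\<dots> \<le> 2 * M / (e - e') * ((1 - b) * cmod z)"
      by (rule norm_diff_dilation_le[OF hol M e z b])
    also have "\<dots> \<le> 2 * M / (e - e') * ((1 - b) * (1 + e))"
      using norm_less_segment_nbhd[OF z] e b M0 by (intro mult_left_mono) auto
    also have "\<dots> = 2 / (e - e') * ((1 - b) * (1 + e)) * M" by simp
    finally show ?thesis .
  qed
  moreover have "cmod (dilation_sum r K (b / r) \<Psi> z) \<le> (\<sigma> - 1) * M"
  proof -
    have br: "0 < b / r" "b / r \<le> 1" using b r by auto
    have "cmod (dilation_sum r K (b / r) \<Psi> z) \<le> (b / r) ^ Suc K * \<sigma> * M"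
      unfolding \<sigma>_def by (rule dilation_sum_bound(2)[where \<Psi>=\<Psi>, OF scaling_closed_segment_nbhd M r br zD])
    also have "\<dots> \<le> (1 / r) ^ Suc K * \<sigma> * M"
      using b r M0 geom_factor_pos[OF r, of "Suc K"]
      by (intro mult_right_mono power_mono divide_right_mono) (auto simp: \<sigma>_def)
    also have "(1 / r) ^ Suc K * \<sigma> = \<sigma> - 1"
      using geom_factor_minus_1[OF r, of "Suc K"] by (simp add: \<sigma>_def power_one_over)
    finally show ?thesis .
  qed
  ultimately show ?thesis
    unfolding \<sigma>_def[symmetric]
    by (smt (verit, best) distrib_right norm_triangle_ineq4 norm_triangle_ineq)
qed

lemma quadratic_times_power_tendsto_0:
  fixes q :: real
  assumes "0 \<le> q" "q < 1"
  shows "(\<lambda>N. real (Suc N) * real (Suc (Suc N)) * q ^ N) \<longlonglongrightarrow> 0"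
proof -
  have "Suc N * Suc (Suc N) = 2 * ((N + 2) choose 2)" for N
    by (induction N) (simp_all add: choose_two)
  then have "real (Suc N * Suc (Suc N)) = real (2 * ((N + 2) choose 2))" for N
    by (simp only:)
  then have c2: "real (Suc N) * real (Suc (Suc N)) = 2 * real ((N + 2) choose 2)" for N
    by (simp only: of_nat_mult of_nat_numeral)
  have "(\<lambda>N. 2 * (real ((N + 2) choose 2) * q ^ N)) \<longlonglongrightarrow> 0"
    by (intro tendsto_mult_right_zero summable_LIMSEQ_zero summable_choose_mult_power assms)
  then show ?thesis by (simp only: c2 mult.assoc)
qed

lemma contraction_factor_eventually_le_half:
  assumes r: "r > 1" and K: "4 \<le> r ^ Suc K" and \<eta>: "\<eta> > 0"
  shows "\<forall>\<^sub>F N in sequentially. (1 - beta r (Suc N) ^ Suc K) + (geom_factor r (Suc K) - 1)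
           + 2 * (real (Suc N) * real (Suc (Suc N))) / \<eta> * ((1 - beta r (Suc N)) * (1 + 2 * \<eta>)) \<le> 1 / 2"
proof -
  have "\<And>R::real. R > 1 \<Longrightarrow> 1 / (1 - 1 / R) - 1 = 1 / (R - 1)" by (simp add: field_simps)
  then have "geom_factor r (Suc K) - 1 = 1 / (r ^ Suc K - 1)"
    using K unfolding geom_factor_def by simp
  also have "\<dots> \<le> 1 / 3" using K by (simp add: field_simps)
  finally have \<sigma>: "geom_factor r (Suc K) - 1 \<le> 1 / 3" .
  define U where "U N = real (Suc K) * (1 / r) ^ Suc N
      + 2 * (1 + 2 * \<eta>) / (\<eta> * r) * (real (Suc N) * real (Suc (Suc N)) * (1 / r) ^ N)" for N
  have "U \<longlonglongrightarrow> real (Suc K) * 0 + 2 * (1 + 2 * \<eta>) / (\<eta> * r) * 0"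
    unfolding U_def using r
    by (intro tendsto_intros LIMSEQ_Suc LIMSEQ_power_zero quadratic_times_power_tendsto_0) auto
  then have "\<forall>\<^sub>F N in sequentially. U N < 1 / 6" by (intro order_tendstoD) auto
  then show ?thesis
  proof (rule eventually_mono)
    fix N assume U: "U N < 1 / 6"
    define b where "b = beta r (Suc N)"
    have b: "0 \<le> b" "1 - b \<le> (1 / r) ^ Suc N"
      using beta_pos[OF r] one_minus_beta_le[OF r, of "Suc N"] by (auto simp: b_def power_one_over less_imp_le)
    have "1 - b ^ Suc K \<le> real (Suc K) * (1 - b)"
      using Bernoulli_inequality[of "b - 1" "Suc K"] b by (simp add: algebra_simps)
    also have "\<dots> \<le> real (Suc K) * (1 / r) ^ Suc N" using b by (intro mult_left_mono) auto
    finally have t1: "1 - b ^ Suc K \<le> real (Suc K) * (1 / r) ^ Suc N" .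
    have "2 * (real (Suc N) * real (Suc (Suc N))) / \<eta> * ((1 - b) * (1 + 2 * \<eta>))
        \<le> 2 * (real (Suc N) * real (Suc (Suc N))) / \<eta> * ((1 / r) ^ Suc N * (1 + 2 * \<eta>))"
      using b \<eta> by (intro mult_left_mono mult_right_mono) auto
    also have "\<dots> = 2 * (1 + 2 * \<eta>) / (\<eta> * r) * (real (Suc N) * real (Suc (Suc N)) * (1 / r) ^ N)"
      by (simp add: field_simps)
    finally show "(1 - b ^ Suc K) + (geom_factor r (Suc K) - 1)
        + 2 * (real (Suc N) * real (Suc (Suc N))) / \<eta> * ((1 - b) * (1 + 2 * \<eta>)) \<le> 1 / 2"
      using t1 \<sigma> U unfolding U_def by linarith
  qed
qed

lemma remainder_at_1_tendsto_0:
  assumes r: "r > 1" and K: "4 \<le> r ^ Suc K" and \<eta>: "\<eta> > 0"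
    and hol: "\<psi> holomorphic_on segment_nbhd (2 * \<eta>)" and M: "\<And>w. w \<in> segment_nbhd (2 * \<eta>) \<Longrightarrow> cmod (\<psi> w) \<le> M"
  shows "(\<lambda>N. remainder r K \<psi> N 1) \<longlonglongrightarrow> 0"
proof -
  define e where "e = (\<lambda>N::nat. \<eta> + \<eta> / real (Suc N))"
  have e_le: "e N \<le> 2 * \<eta>" for N unfolding e_def using \<eta> by (simp add: field_simps)
  have e_pos: "e N > 0" for N unfolding e_def using \<eta> by (simp add: add_pos_pos)
  have e_gap: "e N - e (Suc N) = \<eta> / (real (Suc N) * real (Suc (Suc N)))" for N
    unfolding e_def by (simp add: field_simps)
  have e_dec: "e (Suc N) < e N" for N
  proof -
    have "0 < \<eta> / (real (Suc N) * real (Suc (Suc N)))" using \<eta> by simp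
    then show ?thesis using e_gap[of N] by linarith
  qed
  obtain N0 where N0: "\<And>N. N \<ge> N0 \<Longrightarrow> (1 - beta r (Suc N) ^ Suc K) + (geom_factor r (Suc K) - 1)
      + 2 * (real (Suc N) * real (Suc (Suc N))) / \<eta> * ((1 - beta r (Suc N)) * (1 + 2 * \<eta>)) \<le> 1 / 2"
    using contraction_factor_eventually_le_half[OF r K \<eta>] by (auto simp: eventually_sequentially)
  have factor: "(1 - beta r (Suc N) ^ Suc K) + (geom_factor r (Suc K) - 1)
      + 2 / (e N - e (Suc N)) * ((1 - beta r (Suc N)) * (1 + e N)) \<le> 1 / 2" if "N \<ge> N0" for N
  proof -
    have eq: "2 / (e N - e (Suc N)) = 2 * (real (Suc N) * real (Suc (Suc N))) / \<eta>"
      unfolding e_gap by simp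
    have "(1 - beta r (Suc N)) * (1 + e N) \<le> (1 - beta r (Suc N)) * (1 + 2 * \<eta>)"
      using e_le[of N] beta_le_1[OF r, of "Suc N"] by (intro mult_left_mono) auto
    moreover have "0 \<le> 2 * (real (Suc N) * real (Suc (Suc N))) / \<eta>" using \<eta> by simp
    ultimately have "2 / (e N - e (Suc N)) * ((1 - beta r (Suc N)) * (1 + e N))
        \<le> 2 * (real (Suc N) * real (Suc (Suc N))) / \<eta> * ((1 - beta r (Suc N)) * (1 + 2 * \<eta>))"
      unfolding eq by (rule mult_left_mono)
    then show ?thesis using N0[OF that] by linarith
  qed
  obtain C0 where C0: "\<And>w. w \<in> segment_nbhd (2 * \<eta>) \<Longrightarrow> cmod (remainder r K \<psi> N0 w) \<le> C0"
    using remainder_holomorphic_bounded(2)[OF r hol M] by blast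
  have "0 < 2 * \<eta>" using \<eta> by simp
  then have "C0 \<ge> 0" by (rule order_trans[OF norm_ge_zero C0[OF one_in_segment_nbhd]])
  have decay: "\<forall>w\<in>segment_nbhd (e (N0 + n)). cmod (remainder r K \<psi> (N0 + n) w) \<le> C0 * (1 / 2) ^ n" for n
  proof (induction n)
    case 0
    then show ?case using C0 segment_nbhd_mono[OF e_le] by auto
  next
    case (Suc n)
    define N where "N = N0 + n"
    have IH: "\<And>w. w \<in> segment_nbhd (e N) \<Longrightarrow> cmod (remainder r K \<psi> N w) \<le> C0 * (1 / 2) ^ n"
      using Suc N_def by auto
    have holN: "remainder r K \<psi> N holomorphic_on segment_nbhd (e N)"
      using remainder_holomorphic_bounded(1)[OF r hol M] segment_nbhd_mono[OF e_le] holomorphic_on_subset by blast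
    show ?case
    proof
      fix w assume "w \<in> segment_nbhd (e (N0 + Suc n))"
      then have w: "w \<in> segment_nbhd (e (Suc N))" by (simp add: N_def)
      have "cmod (remainder r K \<psi> (Suc N) w) \<le> ((1 - beta r (Suc N) ^ Suc K) + (geom_factor r (Suc K) - 1)
          + 2 / (e N - e (Suc N)) * ((1 - beta r (Suc N)) * (1 + e N))) * (C0 * (1 / 2) ^ n)"
        unfolding remainder.simps
        by (rule remainder_step_contraction[OF holN IH e_pos e_dec w beta_pos[OF r] beta_le_1[OF r] r]) auto
      also have "\<dots> \<le> 1 / 2 * (C0 * (1 / 2) ^ n)"
        using factor[of N] \<open>C0 \<ge> 0\<close> by (intro mult_right_mono) (auto simp: N_def)
      finally show "cmod (remainder r K \<psi> (N0 + Suc n) w) \<le> C0 * (1 / 2) ^ Suc n" by (simp add: N_def)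
    qed
  qed
  have "(\<lambda>n. remainder r K \<psi> (n + N0) 1) \<longlonglongrightarrow> 0"
  proof (rule Lim_null_comparison[OF always_eventually])
    show "\<forall>n. norm (remainder r K \<psi> (n + N0) 1) \<le> C0 * (1 / 2) ^ n"
      using decay one_in_segment_nbhd[OF e_pos] by (simp add: add.commute)
    show "(\<lambda>n. C0 * (1 / 2) ^ n) \<longlonglongrightarrow> 0" by (intro tendsto_mult_right_zero LIMSEQ_power_zero) auto
  qed
  then show ?thesis by (rule LIMSEQ_offset)
qed

lemma taylor_quotient_bounded_segment_nbhd:
  assumes "\<phi> holomorphic_on segment_nbhd \<epsilon>" "0 < e" "e < \<epsilon>"
  obtains M where "\<And>w. w \<in> segment_nbhd e \<Longrightarrow> cmod (taylor_quotient \<phi> n w) \<le> M"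
proof -
  have "taylor_quotient \<phi> n holomorphic_on segment_nbhd \<epsilon>"
    using assms by (intro taylor_quotient_holomorphic open_segment_nbhd zero_in_segment_nbhd) auto
  then show ?thesis
    using continuous_bounded_segment_nbhd[OF holomorphic_on_imp_continuous_on assms(3)] that by blast
qed

lemma ray_bound_at_1:
  assumes "\<phi> holomorphic_on segment_nbhd \<epsilon>" "\<epsilon> > 0" "\<phi> 0 = 0"
  obtains C where "ray_bound \<phi> 1 C"
proof -
  have "0 < \<epsilon> / 2" "\<epsilon> / 2 < \<epsilon>" using assms(2) by auto
  then obtain M where M: "\<And>w. w \<in> segment_nbhd (\<epsilon> / 2) \<Longrightarrow> cmod (taylor_quotient \<phi> (Suc 0) w) \<le> M"
    using taylor_quotient_bounded_segment_nbhd[OF assms(1)] by blast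
  have "\<phi> z = (\<Sum>m\<in>{1..0}. taylor_quotient \<phi> m 0 * z ^ m) + z ^ Suc 0 * taylor_quotient \<phi> (Suc 0) z" for z
    by (rule taylor_quotient_expansion_0[where \<phi>=\<phi>, OF assms(3)])
  from ray_bound_of_expansion[where \<psi>="taylor_quotient \<phi> (Suc 0)",
      OF scaling_closed_segment_nbhd M this one_in_segment_nbhd[OF \<open>0 < \<epsilon> / 2\<close>]]
  show ?thesis by (rule that)
qed

lemma alternating_sum_at_1_tendsto_0:
  assumes hol: "\<phi> holomorphic_on segment_nbhd \<epsilon>" and "\<epsilon> > 0" "\<phi> 0 = 0" and r: "r > 1"
  shows "(\<lambda>N. alternating_sum r N \<phi> 1) \<longlonglongrightarrow> 0"
proof -
  obtain K where "4 < r ^ K" using real_arch_pow[OF r] by blast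
  then have K: "4 \<le> r ^ Suc K" using power_increasing[of K "Suc K" r] r by linarith
  define \<eta> where "\<eta> = \<epsilon> / 4"
  have \<eta>: "\<eta> > 0" "0 < 2 * \<eta>" "2 * \<eta> < \<epsilon>" using \<open>\<epsilon> > 0\<close> by (auto simp: \<eta>_def)
  define \<psi> where "\<psi> = taylor_quotient \<phi> (Suc K)"
  obtain M where M: "\<And>w. w \<in> segment_nbhd (2 * \<eta>) \<Longrightarrow> cmod (\<psi> w) \<le> M"
    using taylor_quotient_bounded_segment_nbhd[OF hol \<eta>(2,3)] unfolding \<psi>_def by blast
  have hol\<psi>: "\<psi> holomorphic_on segment_nbhd (2 * \<eta>)"
    using hol \<open>\<epsilon> > 0\<close> \<eta> segment_nbhd_mono[of "2 * \<eta>" \<epsilon>] unfolding \<psi>_def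
    by (intro taylor_quotient_holomorphic open_segment_nbhd zero_in_segment_nbhd)
       (auto intro: holomorphic_on_subset)
  have expansion: "\<phi> z = (\<Sum>m\<in>{1..K}. taylor_quotient \<phi> m 0 * z ^ m) + z ^ Suc K * \<psi> z" for z
    unfolding \<psi>_def by (rule taylor_quotient_expansion_0[where \<phi>=\<phi>, OF \<open>\<phi> 0 = 0\<close>])
  have eq: "alternating_sum r N \<phi> 1 = remainder r K \<psi> N 1" if "N \<ge> K" for N
    using alternating_sum_expansion[where \<psi>=\<psi> and N=N,
        OF scaling_closed_segment_nbhd M r expansion one_in_segment_nbhd[OF \<eta>(2)]]
      coeff_factor_eq_0[OF r] that
    by simp
  have "\<forall>\<^sub>F N in sequentially. remainder r K \<psi> N 1 = alternating_sum r N \<phi> 1"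
    by (rule eventually_sequentiallyI[of K]) (simp add: eq)
  with remainder_at_1_tendsto_0[OF r K \<eta>(1) hol\<psi> M] show ?thesis
    by (rule Lim_transform_eventually)
qed

section \<open>Products and their ratios\<close>

lemma xn_eq_beta_prod:
  assumes r: "r > 1" and S: "finite S"
  shows "xn S r x (i + card S) = x * (beta_prod r S / r ^ i)"
proof -
  have "beta_prod r S = (\<Prod>k\<in>S. (r ^ k - 1) powr (1 / real k)) / r ^ card S"
    unfolding beta_prod_def beta_def by (simp add: prod_dividef)
  then show ?thesis unfolding xn_def using r by (simp add: power_add field_simps)
qed

lemma Pf_eq_exp:
  assumes r: "r > 1" and S: "finite S" "S \<noteq> {}" "0 \<notin> S"
    and ray: "ray_bound \<phi> 1 C"
    and fl: "\<And>t. t \<in> {0..1} \<Longrightarrow> f (x * t) > 0 \<and> Re (\<phi> (of_real t)) = ln (f (x * t))"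
  shows "convergent_prod (\<lambda>i. f (xn S r x (i + card S)) ^ ((i + card S - 1) choose (card S - 1)))"
    and "Pf f S r x = exp (Re (dilation_series r \<phi> S 1))"
proof -
  obtain t where t: "card S = Suc t" using S by (metis card_0_eq not0_implies_Suc)
  define B where "B = beta_prod r S"
  have B: "0 < B" "B \<le> 1" using beta_prod_pos beta_prod_le_1 r S by (auto simp: B_def)
  define tt where "tt = (\<lambda>i::nat. B / r ^ i)"
  have tt: "tt i \<in> {0..1}" "0 < tt i" for i using dilation_factor_bounds[OF r B, of i] by (auto simp: tt_def)
  define a where "a = (\<lambda>i. real ((i + t) choose t) * ln (f (x * tt i)))"
  have u: "f (xn S r x (i + card S)) ^ ((i + card S - 1) choose (card S - 1)) = exp (a i)" for i
  proof -
    have fp: "f (x * tt i) > 0" using fl[OF tt(1)] by blast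
    have "f (xn S r x (i + card S)) ^ ((i + card S - 1) choose (card S - 1)) = f (x * tt i) ^ ((i + t) choose t)"
      using xn_eq_beta_prod[OF r S(1)] t by (simp add: tt_def B_def)
    also have "\<dots> = exp (a i)" unfolding a_def using fp by (simp add: exp_of_nat_mult[symmetric] ln_realpow[symmetric])
    finally show ?thesis .
  qed
  have sn: "summable (\<lambda>i. real ((i + t) choose t) * norm (\<phi> (1 * of_real (B / r ^ i))))"
    by (rule ray_bound_summable[OF ray r B])
  have Qeq: "dilation_series r \<phi> S 1 = (\<Sum>i. of_nat ((i + t) choose t) * \<phi> (of_real (tt i)))"
    using S(2) t by (simp add: dilation_series_def B_def tt_def)
  have scs: "summable (\<lambda>i. of_nat ((i + t) choose t) * \<phi> (of_real (tt i)))"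
    by (rule summable_norm_cancel) (use sn in \<open>simp add: norm_mult tt_def\<close>)
  have ae: "a i = Re (of_nat ((i + t) choose t) * \<phi> (of_real (tt i)))" for i
    using fl[OF tt(1)[of i]] by (simp add: a_def)
  have sa: "summable a"
  proof (rule summable_comparison_test'[OF sn])
    fix i
    have "norm (a i) \<le> real ((i + t) choose t) * cmod (\<phi> (of_real (tt i)))"
      unfolding ae using abs_Re_le_cmod[of "\<phi> (of_real (tt i))"] by (simp add: abs_mult mult_left_mono)
    then show "norm (a i) \<le> real ((i + t) choose t) * norm (\<phi> (1 * of_real (B / r ^ i)))"
      by (simp add: tt_def)
  qed
  show "convergent_prod (\<lambda>i. f (xn S r x (i + card S)) ^ ((i + card S - 1) choose (card S - 1)))"
    unfolding u by (rule convergent_prod_exp[OF sa])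
  have "Pf f S r x = exp (suminf a)"
    unfolding Pf_def u by (rule prodinf_exp[OF sa])
  also have "suminf a = Re (dilation_series r \<phi> S 1)"
    unfolding Qeq Re_suminf[OF scs] ae by simp
  finally show "Pf f S r x = exp (Re (dilation_series r \<phi> S 1))" .
qed

lemma Re_alternating_sum_eq:
  "Re (alternating_sum r N h z) = Re (h z)
     + (\<Sum>S\<in>{S. S \<subseteq> {1..N} \<and> S \<noteq> {} \<and> even (card S)}. Re (dilation_series r h S z))
     - (\<Sum>S\<in>{S. S \<subseteq> {1..N} \<and> S \<noteq> {} \<and> odd (card S)}. Re (dilation_series r h S z))"
proof -
  define Od where "Od = {S. S \<subseteq> {1..N} \<and> S \<noteq> {} \<and> odd (card S)}"
  define Ev where "Ev = {S. S \<subseteq> {1..N} \<and> S \<noteq> {} \<and> even (card S)}"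
  have fin: "finite Od" "finite Ev" unfolding Od_def Ev_def
    by (auto intro: finite_subset[of _ "Pow {1..N}"])
  have P: "Pow {1..N} = insert {} (Od \<union> Ev)" by (auto simp: Od_def Ev_def)
  have "{} \<notin> Od \<union> Ev" "Od \<inter> Ev = {}" by (auto simp: Od_def Ev_def)
  have "Re (alternating_sum r N h z) = (\<Sum>S\<in>Pow {1..N}. (-1) ^ card S * Re (dilation_series r h S z))"
    unfolding alternating_sum_def Re_sum
    by (intro sum.cong refl) (simp add: minus_one_power_iff)
  also have "\<dots> = Re (h z) + (\<Sum>S\<in>Od. (-1) ^ card S * Re (dilation_series r h S z))
      + (\<Sum>S\<in>Ev. (-1) ^ card S * Re (dilation_series r h S z))"
    unfolding P using fin \<open>{} \<notin> Od \<union> Ev\<close> \<open>Od \<inter> Ev = {}\<close>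
    by (simp add: sum.union_disjoint dilation_series_def)
  also have "(\<Sum>S\<in>Od. (-1) ^ card S * Re (dilation_series r h S z)) = - (\<Sum>S\<in>Od. Re (dilation_series r h S z))"
    by (simp add: Od_def sum_negf[symmetric])
  also have "(\<Sum>S\<in>Ev. (-1) ^ card S * Re (dilation_series r h S z)) = (\<Sum>S\<in>Ev. Re (dilation_series r h S z))"
    by (simp add: Ev_def)
  finally show ?thesis by (simp add: Od_def Ev_def)
qed

lemma ratioN_eq_exp:
  assumes r: "r > 1" and ray: "ray_bound \<phi> 1 C"
    and fl: "\<And>t. t \<in> {0..1} \<Longrightarrow> f (x * t) > 0 \<and> Re (\<phi> (of_real t)) = ln (f (x * t))"
  shows "ratioN f N r x = exp (Re (\<phi> 1) - Re (alternating_sum r N \<phi> 1))"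
proof -
  define Od where "Od = {S. S \<subseteq> {1..N} \<and> S \<noteq> {} \<and> odd (card S)}"
  define Ev where "Ev = {S. S \<subseteq> {1..N} \<and> S \<noteq> {} \<and> even (card S)}"
  have fin: "finite Od" "finite Ev" unfolding Od_def Ev_def
    by (auto intro: finite_subset[of _ "Pow {1..N}"])
  have Pf_S: "Pf f S r x = exp (Re (dilation_series r \<phi> S 1))" if "S \<in> Od \<union> Ev" for S
  proof -
    have "finite S" "S \<noteq> {}" "0 \<notin> S" using that finite_subset[of S "{1..N}"] by (auto simp: Od_def Ev_def)
    then show ?thesis by (rule Pf_eq_exp(2)[OF r _ _ _ ray fl])
  qed
  have "ratioN f N r x
      = exp (\<Sum>S\<in>Od. Re (dilation_series r \<phi> S 1)) / exp (\<Sum>S\<in>Ev. Re (dilation_series r \<phi> S 1))"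
    unfolding ratioN_def Od_def[symmetric] Ev_def[symmetric] using Pf_S by (simp add: exp_sum fin)
  then show ?thesis
    unfolding Re_alternating_sum_eq Od_def[symmetric] Ev_def[symmetric] by (simp add: exp_diff)
qed

theorem theorem1:
  fixes f :: "real \<Rightarrow> real" and x :: real
  assumes "real_analytic_on f {min 0 x..max 0 x}"
    and "\<forall>y\<in>{min 0 x..max 0 x}. f y \<noteq> 0"
    and "f 0 = 1"
  shows "(\<forall>\<^sub>F r in at_right 1. \<forall>S. finite S \<and> S \<noteq> {} \<and> 0 \<notin> S \<longrightarrow>
            convergent_prod (\<lambda>i. f (xn S r x (i + card S)) ^ ((i + card S - 1) choose (card S - 1))))
       \<and> (\<exists>R :: real \<Rightarrow> real.
            (\<forall>\<^sub>F r in at_right 1. (\<lambda>N. ratioN f N r x) \<longlonglongrightarrow> R r)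
            \<and> (R \<longlongrightarrow> f x) (at_right 1))"
proof -
  obtain \<epsilon> \<phi> where \<epsilon>: "\<epsilon> > 0" and hol: "\<phi> holomorphic_on segment_nbhd \<epsilon>" and "\<phi> 0 = 0"
    and fl: "\<And>t. t \<in> {0..1} \<Longrightarrow> f (x * t) > 0 \<and> Re (\<phi> (of_real t)) = ln (f (x * t))"
    using holomorphic_log_extension[OF assms] by blast
  obtain C where ray: "ray_bound \<phi> 1 C" using ray_bound_at_1[OF hol \<epsilon> \<open>\<phi> 0 = 0\<close>] by blast
  have conv: "convergent_prod (\<lambda>i. f (xn S r x (i + card S)) ^ ((i + card S - 1) choose (card S - 1)))"
    if "r > 1" "finite S \<and> S \<noteq> {} \<and> 0 \<notin> S" for r S
    using Pf_eq_exp(1)[OF \<open>r > 1\<close> _ _ _ ray fl] that by blast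
  have lim: "(\<lambda>N. ratioN f N r x) \<longlonglongrightarrow> f x" if r: "r > 1" for r
  proof -
    have "(\<lambda>N. exp (Re (\<phi> 1) - Re (alternating_sum r N \<phi> 1))) \<longlonglongrightarrow> exp (Re (\<phi> 1) - Re 0)"
      by (intro tendsto_intros alternating_sum_at_1_tendsto_0[OF hol \<epsilon> \<open>\<phi> 0 = 0\<close> r])
    then show ?thesis using ratioN_eq_exp[OF r ray fl] fl[of 1] by simp
  qed
  have ev: "\<forall>\<^sub>F r in at_right 1. r > (1::real)" by (rule eventually_at_right_less)
  show ?thesis
  proof (intro conjI exI[of _ "\<lambda>_. f x"] tendsto_const)
    from ev show "\<forall>\<^sub>F r in at_right 1. \<forall>S. finite S \<and> S \<noteq> {} \<and> 0 \<notin> S \<longrightarrow>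
        convergent_prod (\<lambda>i. f (xn S r x (i + card S)) ^ ((i + card S - 1) choose (card S - 1)))"
      by eventually_elim (use conv in blast)
    from ev show "\<forall>\<^sub>F r in at_right 1. (\<lambda>N. ratioN f N r x) \<longlonglongrightarrow> f x"
      by eventually_elim (rule lim)
  qed
qed

end
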